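(* Let $n \ge 2$ and let $\lambda = (n-1, n-2, \ldots, 2, 1)$. Then the moment variety $\mathcal{M}_{n,\lambda}$ is the projective toric variety of the Birkhoff polytope $B_n$. Under the identification of the coordinate $m_{i_1 i_2 \cdots i_n}$ (where $(i_1,\ldots,i_n)$ is a permutation of $\{0,1,\ldots,n-1\}$) with the $n\times n$ permutation matrix having a $1$ in position $(k, i_k+1)$ for each $k$, this variety lives in $\mathbb{P}^{n!-1}$, and it has dimension $(n-1)^2$.
   Context: Work over $\mathbb{C}$. For a partition $\lambda$ of $d$ with at most $n$ parts, let $N_\lambda$ be the set of vectors $(i_1,\ldots,i_n) \in \mathbb{Z}_{\ge 0}^n$ whose multiset of nonzero entries equals $\lambda$. The moment variety $\mathcal{M}_{n,\lambda} \subset \mathbb{P}^{|N_\lambda|-1}$, with coordinates $m_{i_1\cdots i_n}$ for $(i_1,\ldots,i_n)\in N_\lambda$, is the Zariski closure of the image of the monomial map $$(\mu_{ki})_{k\in[n],\, i\in[d]} \mapsto \bigl(\mu_{1 i_1}\mu_{2 i_2}\cdots \mu_{n i_n}\bigr)_{(i_1,\ldots,i_n)\in N_\lambda},$$ with the convention $\mu_{k0}=1$. The Birkhoff polytope $B_n$ is the convex hull of the $n!$ permutation matrices of size $n\times n$. The toric variety of $B_n$ is the Zariski closure of the image of the monomial map $t=(t_{ab}) \mapsto (t^{P})_{P}$, where $P$ ranges over the permutation matrices and $t^P=\prod_{a,b} t_{ab}^{P_{ab}}$. *)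

theory Defs
  imports Complex_Main "HOL-Library.Poly_Mapping" "HOL-Library.Multiset" "HOL-Combinatorics.Permutations"
begin

text \<open>A projective variety in P^{|I|-1} with coordinates indexed by a finite set I is
represented by its affine cone in C^I; points of C^I are functions that vanish outside I.\<close>

definition ambient :: "'i set \<Rightarrow> ('i \<Rightarrow> complex) set" where
  "ambient I = {x. \<forall>i. i \<notin> I \<longrightarrow> x i = 0}"

definition mpoly_eval :: "(('i \<Rightarrow>\<^sub>0 nat) \<Rightarrow>\<^sub>0 complex) \<Rightarrow> ('i \<Rightarrow> complex) \<Rightarrow> complex" where
  "mpoly_eval p x = Sum_any (\<lambda>mo. Poly_Mapping.lookup p mo * Prod_any (\<lambda>v. x v ^ Poly_Mapping.lookup mo v))"

definition zariski_closed :: "'i set \<Rightarrow> ('i \<Rightarrow> complex) set \<Rightarrow> bool" where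
  "zariski_closed I S \<longleftrightarrow>
     (\<exists>F. S = {x \<in> ambient I. \<forall>p\<in>F. mpoly_eval p x = 0})"

definition zariski_closure :: "'i set \<Rightarrow> ('i \<Rightarrow> complex) set \<Rightarrow> ('i \<Rightarrow> complex) set" where
  "zariski_closure I S = \<Inter>{T. zariski_closed I T \<and> S \<subseteq> T}"

text \<open>Affine cone of the projective closure of the image of a (coordinatewise) map f.\<close>
definition proj_closure_cone :: "'i set \<Rightarrow> ('p \<Rightarrow> 'i \<Rightarrow> complex) \<Rightarrow> ('i \<Rightarrow> complex) set" where
  "proj_closure_cone I f =
     zariski_closure I {(\<lambda>i. if i \<in> I then c * f p i else 0) | c p. True}"

definition irreducible_closed :: "'i set \<Rightarrow> ('i \<Rightarrow> complex) set \<Rightarrow> bool" where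
  "irreducible_closed I S \<longleftrightarrow> zariski_closed I S \<and> S \<noteq> {} \<and>
     (\<forall>A B. zariski_closed I A \<and> zariski_closed I B \<and> S = A \<union> B \<longrightarrow> S = A \<or> S = B)"

definition krull_dim :: "'i set \<Rightarrow> ('i \<Rightarrow> complex) set \<Rightarrow> nat" where
  "krull_dim I V = Sup {k. \<exists>C :: nat \<Rightarrow> ('i \<Rightarrow> complex) set.
      (\<forall>j\<le>k. irreducible_closed I (C j) \<and> C j \<subseteq> V) \<and> (\<forall>j<k. C j \<subset> C (Suc j))}"

text \<open>Dimension of the projective variety whose affine cone is V.\<close>
definition proj_dim :: "'i set \<Rightarrow> ('i \<Rightarrow> complex) set \<Rightarrow> nat" where
  "proj_dim I V = krull_dim I V - 1"

text \<open>Index vectors (i_1,...,i_n) as lists of length n; partition lambda as a list.\<close>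
definition N_lambda :: "nat \<Rightarrow> nat list \<Rightarrow> nat list set" where
  "N_lambda n lam = {is. length is = n \<and> mset (filter (\<lambda>i. i \<noteq> 0) is) = mset lam}"

text \<open>Parameters mu k i (k = 0..n-1 corresponds to k+1 in the paper), with mu_{k0} = 1.\<close>
definition moment_coord :: "nat \<Rightarrow> (nat \<Rightarrow> nat \<Rightarrow> complex) \<Rightarrow> nat list \<Rightarrow> complex" where
  "moment_coord n mu is = (\<Prod>k<n. if is ! k = 0 then 1 else mu k (is ! k))"

definition moment_variety :: "nat \<Rightarrow> nat list \<Rightarrow> (nat list \<Rightarrow> complex) set" where
  "moment_variety n lam = proj_closure_cone (N_lambda n lam) (moment_coord n)"

definition staircase :: "nat \<Rightarrow> nat list" where
  "staircase n = rev [1..<n]"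

text \<open>n x n matrices as functions on index pairs (0-indexed), zero outside the n x n block.\<close>
definition perm_matrix :: "nat \<Rightarrow> (nat \<Rightarrow> nat) \<Rightarrow> (nat \<times> nat \<Rightarrow> nat)" where
  "perm_matrix n \<sigma> = (\<lambda>(a, b). if a < n \<and> b < n \<and> b = \<sigma> a then 1 else 0)"

definition perm_matrices :: "nat \<Rightarrow> (nat \<times> nat \<Rightarrow> nat) set" where
  "perm_matrices n = {perm_matrix n \<sigma> | \<sigma>. \<sigma> permutes {..<n}}"

definition toric_coord :: "nat \<Rightarrow> (nat \<times> nat \<Rightarrow> complex) \<Rightarrow> (nat \<times> nat \<Rightarrow> nat) \<Rightarrow> complex" where
  "toric_coord n t P = (\<Prod>ab\<in>{..<n} \<times> {..<n}. t ab ^ P ab)"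

definition birkhoff_toric_variety :: "nat \<Rightarrow> ((nat \<times> nat \<Rightarrow> nat) \<Rightarrow> complex) set" where
  "birkhoff_toric_variety n = proj_closure_cone (perm_matrices n) (toric_coord n)"

text \<open>Identification: m_{i_1...i_n} corresponds to the permutation matrix with 1 in
position (k, i_k + 1) (1-indexed), i.e. (k-1, i_k) 0-indexed.\<close>
definition ident_matrix :: "nat \<Rightarrow> nat list \<Rightarrow> (nat \<times> nat \<Rightarrow> nat)" where
  "ident_matrix n is = (\<lambda>(a, b). if a < n \<and> b < n \<and> b = is ! a then 1 else 0)"

end

theory Submission
  imports Defs "HOL-Combinatorics.Multiset_Permutations" "HOL-Computational_Algebra.Polynomial"
    "HOL-Library.Function_Algebras"
begin

text \<open>The index vectors of the staircase partition are exactly the permutations \<open>i\<close> of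
  \<open>{0, ..., n - 1}\<close>, and with \<open>\<mu> k 0 = 1\<close> the coordinate \<open>m\<^sub>i\<close> is \<open>\<Prod>k. \<mu> k (i k)\<close>.
  Allowing an arbitrary entry \<open>t k 0\<close> in place of \<open>\<mu> k 0\<close> gives the points \<open>(\<Prod>k. t k (i k))\<^sub>i\<close>:
  those with all \<open>t k 0 \<noteq> 0\<close> are rescaled moment points and the others are limits of these.
  So the moment variety is the closure of these points, i.e. the toric variety of the Birkhoff
  polytope with its coordinates relabelled.

  For the dimension we work with the affine cone, of dimension \<open>(n - 1)\<^sup>2 + 1\<close>. Pulled back to
  the parameters \<open>(c, \<mu>)\<close>, a polynomial of degree at most \<open>D\<close> becomes a combination of monomials
  \<open>c ^ d * (\<Prod>(k, b). \<mu> k b ^ A (k, b))\<close> whose exponent matrix \<open>A\<close> has all column sums equal to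
  \<open>d\<close>, and there are at most \<open>(D + 1) ^ ((n - 1)\<^sup>2 + 1)\<close> of these. A proper closed subset of an
  irreducible set has a Hilbert function growing by one power of \<open>D\<close> less, so no chain of
  irreducible closed subsets is longer. Conversely, letting the support of \<open>\<mu>\<close> grow one entry at a
  time, each step admitting a new permutation, gives a chain of exactly that length.\<close>

section \<open>Polynomial functions\<close>

definition monom_eval :: "('i \<Rightarrow>\<^sub>0 nat) \<Rightarrow> ('i \<Rightarrow> complex) \<Rightarrow> complex" where
  "monom_eval m x = Prod_any (\<lambda>v. x v ^ Poly_Mapping.lookup m v)"

definition monom_degree :: "('i \<Rightarrow>\<^sub>0 nat) \<Rightarrow> nat" where
  "monom_degree m = (\<Sum>v\<in>Poly_Mapping.keys m. Poly_Mapping.lookup m v)"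

lemma monom_eval_eq_prod_keys:
  "monom_eval m x = (\<Prod>v\<in>Poly_Mapping.keys m. x v ^ Poly_Mapping.lookup m v)"
  unfolding monom_eval_def
  by (rule Prod_any.expand_superset) (auto simp: in_keys_iff, metis gr0I power_0)

lemma monom_eval_zero [simp]: "monom_eval 0 x = 1"
  by (simp add: monom_eval_eq_prod_keys)

lemma monom_eval_add: "monom_eval (m1 + m2) x = monom_eval m1 x * monom_eval m2 x"
proof -
  have fin: "finite {v. x v ^ Poly_Mapping.lookup m v \<noteq> 1}" for m :: "'a \<Rightarrow>\<^sub>0 nat"
    by (rule finite_subset[of _ "Poly_Mapping.keys m"]) (auto simp: in_keys_iff, metis gr0I power_0)
  show ?thesis
    unfolding monom_eval_def lookup_add power_add by (rule Prod_any.distrib[OF fin fin])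
qed

lemma monom_degree_add: "monom_degree (m1 + m2) = monom_degree m1 + monom_degree m2"
proof -
  have "monom_degree m = Sum_any (Poly_Mapping.lookup m)" for m :: "'a \<Rightarrow>\<^sub>0 nat"
    unfolding monom_degree_def by (rule Sum_any.expand_superset[symmetric]) (auto simp: in_keys_iff)
  then show ?thesis by (simp add: lookup_add Sum_any.distrib)
qed

lemma mpoly_eval_eq_sum_keys:
  "mpoly_eval p x = (\<Sum>m\<in>Poly_Mapping.keys p. Poly_Mapping.lookup p m * monom_eval m x)"
  unfolding mpoly_eval_def monom_eval_def
  by (rule Sum_any.expand_superset) (auto simp: in_keys_iff)

lemma mpoly_eval_zero [simp]: "mpoly_eval 0 x = 0"
  by (simp add: mpoly_eval_def)

lemma mpoly_eval_add: "mpoly_eval (p + q) x = mpoly_eval p x + mpoly_eval q x"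
proof -
  have fin: "finite {m. Poly_Mapping.lookup r m * monom_eval m x \<noteq> 0}"
    for r :: "('a \<Rightarrow>\<^sub>0 nat) \<Rightarrow>\<^sub>0 complex"
    by (rule finite_subset[of _ "Poly_Mapping.keys r"]) (auto simp: in_keys_iff)
  show ?thesis
    unfolding mpoly_eval_def monom_eval_def[symmetric] lookup_add distrib_right
    by (rule Sum_any.distrib[OF fin fin])
qed

lemma mpoly_eval_single: "mpoly_eval (Poly_Mapping.single m c) x = c * monom_eval m x"
proof -
  have "mpoly_eval (Poly_Mapping.single m c) x =
      (\<Sum>m'\<in>{m}. Poly_Mapping.lookup (Poly_Mapping.single m c) m' * monom_eval m' x)"
    unfolding mpoly_eval_def monom_eval_def[symmetric]
    by (rule Sum_any.expand_superset) (auto simp: lookup_single when_def)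
  then show ?thesis by simp
qed

lemma update_eq_add_single:
  "k \<notin> Poly_Mapping.keys f \<Longrightarrow> Poly_Mapping.update k b f = f + Poly_Mapping.single k b"
  by (rule poly_mapping_eqI) (auto simp: lookup_update lookup_add lookup_single in_keys_iff when_def)

lemma mpoly_eval_single_mult:
  "mpoly_eval (Poly_Mapping.single m c * q) x = c * monom_eval m x * mpoly_eval q x"
  by (induction q rule: update_induct)
    (simp_all add: update_eq_add_single distrib_left mpoly_eval_add mult_single mpoly_eval_single
      monom_eval_add algebra_simps)

lemma mpoly_eval_mult: "mpoly_eval (p * q) x = mpoly_eval p x * mpoly_eval q x"
proof (induction p rule: update_induct)
  case (update f k b)
  then show ?case
    by (simp add: update_eq_add_single distrib_right mpoly_eval_add mpoly_eval_single_mult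
        mpoly_eval_single)
qed simp

definition poly_fun :: "(('i \<Rightarrow> complex) \<Rightarrow> complex) \<Rightarrow> bool" where
  "poly_fun g \<longleftrightarrow> (\<exists>p. g = mpoly_eval p)"

definition poly_fun_deg :: "nat \<Rightarrow> (('i \<Rightarrow> complex) \<Rightarrow> complex) \<Rightarrow> bool" where
  "poly_fun_deg D g \<longleftrightarrow> (\<exists>p. g = mpoly_eval p \<and> (\<forall>m\<in>Poly_Mapping.keys p. monom_degree m \<le> D))"

lemma poly_fun_deg_imp_poly_fun: "poly_fun_deg D g \<Longrightarrow> poly_fun g"
  unfolding poly_fun_deg_def poly_fun_def by blast

lemma poly_fun_imp_poly_fun_deg:
  assumes "poly_fun g"
  obtains D where "poly_fun_deg D g"
proof -
  obtain p where "g = mpoly_eval p" using assms unfolding poly_fun_def by blast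
  then have "poly_fun_deg (Max (monom_degree ` Poly_Mapping.keys p)) g"
    unfolding poly_fun_deg_def by auto
  then show ?thesis by (rule that)
qed

lemma poly_fun_deg_mono: "D \<le> D' \<Longrightarrow> poly_fun_deg D g \<Longrightarrow> poly_fun_deg D' g"
  unfolding poly_fun_deg_def using order_trans by blast

lemma poly_fun_deg_const: "poly_fun_deg D (\<lambda>x. c)"
  unfolding poly_fun_deg_def
  by (rule exI[of _ "Poly_Mapping.single 0 c"])
    (auto simp: mpoly_eval_single fun_eq_iff monom_degree_def)

lemma poly_fun_deg_coord: "1 \<le> D \<Longrightarrow> poly_fun_deg D (\<lambda>x. x v)"
  unfolding poly_fun_deg_def
  by (rule exI[of _ "Poly_Mapping.single (Poly_Mapping.single v 1) 1"])
    (auto simp: mpoly_eval_single monom_eval_eq_prod_keys monom_degree_def fun_eq_iff)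

lemma poly_fun_deg_add:
  assumes "poly_fun_deg D f" "poly_fun_deg D g"
  shows "poly_fun_deg D (\<lambda>x. f x + g x)"
proof -
  obtain p q where p: "f = mpoly_eval p" "\<forall>m\<in>Poly_Mapping.keys p. monom_degree m \<le> D"
    and q: "g = mpoly_eval q" "\<forall>m\<in>Poly_Mapping.keys q. monom_degree m \<le> D"
    using assms unfolding poly_fun_deg_def by blast
  have "(\<lambda>x. f x + g x) = mpoly_eval (p + q)" by (simp add: p q mpoly_eval_add fun_eq_iff)
  moreover have "\<forall>m\<in>Poly_Mapping.keys (p + q). monom_degree m \<le> D"
    using keys_add[of p q] p q by blast
  ultimately show ?thesis unfolding poly_fun_deg_def by blast
qed

lemma poly_fun_deg_mult:
  assumes "poly_fun_deg D1 f" "poly_fun_deg D2 g"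
  shows "poly_fun_deg (D1 + D2) (\<lambda>x. f x * g x)"
proof -
  obtain p q where p: "f = mpoly_eval p" "\<forall>m\<in>Poly_Mapping.keys p. monom_degree m \<le> D1"
    and q: "g = mpoly_eval q" "\<forall>m\<in>Poly_Mapping.keys q. monom_degree m \<le> D2"
    using assms unfolding poly_fun_deg_def by blast
  have "monom_degree m \<le> D1 + D2" if m: "m \<in> Poly_Mapping.keys (p * q)" for m
  proof -
    obtain a b where "m = a + b" "a \<in> Poly_Mapping.keys p" "b \<in> Poly_Mapping.keys q"
      using keys_mult[of p q] m by blast
    with p q show ?thesis by (simp add: monom_degree_add add_mono)
  qed
  moreover have "(\<lambda>x. f x * g x) = mpoly_eval (p * q)"
    by (simp add: p q mpoly_eval_mult fun_eq_iff)
  ultimately show ?thesis unfolding poly_fun_deg_def by blast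
qed

lemma poly_fun_deg_scale: "poly_fun_deg D f \<Longrightarrow> poly_fun_deg D (\<lambda>x. c * f x)"
  using poly_fun_deg_mult[OF poly_fun_deg_const[of 0 c]] by simp

lemma poly_fun_deg_sum:
  "finite A \<Longrightarrow> (\<And>j. j \<in> A \<Longrightarrow> poly_fun_deg D (f j)) \<Longrightarrow> poly_fun_deg D (\<lambda>x. \<Sum>j\<in>A. f j x)"
  by (induction A rule: finite_induct) (auto intro: poly_fun_deg_const poly_fun_deg_add)

lemma poly_fun_coord: "poly_fun (\<lambda>x. x v)"
  by (rule poly_fun_deg_imp_poly_fun[OF poly_fun_deg_coord[of 1]]) simp

definition fun_subalgebra :: "('z \<Rightarrow> 'a::comm_semiring_1) set \<Rightarrow> bool" where
  "fun_subalgebra K \<longleftrightarrow> (\<forall>c. (\<lambda>z. c) \<in> K) \<and>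
     (\<forall>f\<in>K. \<forall>g\<in>K. (\<lambda>z. f z + g z) \<in> K) \<and> (\<forall>f\<in>K. \<forall>g\<in>K. (\<lambda>z. f z * g z) \<in> K)"

context
  fixes K :: "('z \<Rightarrow> 'a::comm_semiring_1) set"
  assumes K: "fun_subalgebra K"
begin

lemma fun_subalgebra_const: "(\<lambda>z. c) \<in> K"
  using K unfolding fun_subalgebra_def by blast

lemma fun_subalgebra_add: "f \<in> K \<Longrightarrow> g \<in> K \<Longrightarrow> (\<lambda>z. f z + g z) \<in> K"
  using K unfolding fun_subalgebra_def by blast

lemma fun_subalgebra_mult: "f \<in> K \<Longrightarrow> g \<in> K \<Longrightarrow> (\<lambda>z. f z * g z) \<in> K"
  using K unfolding fun_subalgebra_def by blast

lemma fun_subalgebra_sum: "(\<And>a. a \<in> A \<Longrightarrow> f a \<in> K) \<Longrightarrow> (\<lambda>z. \<Sum>a\<in>A. f a z) \<in> K"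
  by (induction A rule: infinite_finite_induct)
    (auto intro: fun_subalgebra_const fun_subalgebra_add)

lemma fun_subalgebra_prod: "(\<And>a. a \<in> A \<Longrightarrow> f a \<in> K) \<Longrightarrow> (\<lambda>z. \<Prod>a\<in>A. f a z) \<in> K"
  by (induction A rule: infinite_finite_induct)
    (auto intro: fun_subalgebra_const fun_subalgebra_mult)

lemma fun_subalgebra_power: "f \<in> K \<Longrightarrow> (\<lambda>z. f z ^ k) \<in> K"
  using fun_subalgebra_prod[of "{..<k}" "\<lambda>_. f"] by simp

end

lemma fun_subalgebra_mpoly_eval:
  assumes K: "fun_subalgebra K" and "\<And>v. (\<lambda>z. F z v) \<in> K"
  shows "(\<lambda>z. mpoly_eval p (F z)) \<in> K"
  unfolding mpoly_eval_eq_sum_keys monom_eval_eq_prod_keys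
  by (intro fun_subalgebra_sum[OF K] fun_subalgebra_mult[OF K] fun_subalgebra_const[OF K]
      fun_subalgebra_prod[OF K] fun_subalgebra_power[OF K] assms(2))

lemma fun_subalgebra_poly_fun_comp:
  "fun_subalgebra K \<Longrightarrow> poly_fun g \<Longrightarrow> (\<And>v. (\<lambda>z. F z v) \<in> K) \<Longrightarrow> (\<lambda>z. g (F z)) \<in> K"
  unfolding poly_fun_def using fun_subalgebra_mpoly_eval by blast

lemma fun_subalgebra_poly_fun: "fun_subalgebra (Collect poly_fun)"
  unfolding fun_subalgebra_def mem_Collect_eq
proof (intro conjI ballI allI)
  show "poly_fun (\<lambda>z. c)" for c by (rule poly_fun_deg_imp_poly_fun[OF poly_fun_deg_const])
  fix f g :: "('a \<Rightarrow> complex) \<Rightarrow> complex"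
  assume "f \<in> Collect poly_fun" "g \<in> Collect poly_fun"
  then obtain D1 D2 where "poly_fun_deg D1 f" "poly_fun_deg D2 g"
    by (metis mem_Collect_eq poly_fun_imp_poly_fun_deg)
  then have "poly_fun_deg (D1 + D2) f" "poly_fun_deg (D1 + D2) g"
    by (auto intro: poly_fun_deg_mono[rotated])
  then show "poly_fun (\<lambda>z. f z + g z)" "poly_fun (\<lambda>z. f z * g z)"
    by (auto intro: poly_fun_deg_imp_poly_fun poly_fun_deg_add poly_fun_deg_mult)
qed

lemma poly_fun_comp: "poly_fun g \<Longrightarrow> (\<And>v. poly_fun (\<lambda>x. F x v)) \<Longrightarrow> poly_fun (\<lambda>x. g (F x))"
  using fun_subalgebra_poly_fun_comp[OF fun_subalgebra_poly_fun, of g F] by simp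

lemma fun_subalgebra_poly: "fun_subalgebra (range (poly :: complex poly \<Rightarrow> complex \<Rightarrow> complex))"
  unfolding fun_subalgebra_def
proof (intro conjI ballI allI)
  show "(\<lambda>z. c) \<in> range poly" for c :: complex by (rule range_eqI[of _ _ "[:c:]"]) auto
  fix f g :: "complex \<Rightarrow> complex"
  assume "f \<in> range poly" "g \<in> range poly"
  then obtain p q where "f = poly p" "g = poly q" by blast
  then have "(\<lambda>z. f z + g z) = poly (p + q)" "(\<lambda>z. f z * g z) = poly (p * q)"
    by (simp_all add: fun_eq_iff)
  then show "(\<lambda>z. f z + g z) \<in> range poly" "(\<lambda>z. f z * g z) \<in> range poly"
    by simp_all
qed

lemma affine_in_range_poly: "(\<lambda>s. a + s * b) \<in> range (poly :: complex poly \<Rightarrow> complex \<Rightarrow> complex)"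
  by (rule range_eqI[of _ _ "[:a, b:]"]) (simp add: fun_eq_iff)

section \<open>The Zariski topology on \<open>\<complex>\<^sup>I\<close>\<close>

lemma zariski_closed_vanishing:
  assumes "\<And>g. g \<in> G \<Longrightarrow> poly_fun g"
  shows "zariski_closed I {x \<in> ambient I. \<forall>g\<in>G. g x = 0}"
proof -
  define P where "P = (\<lambda>g. SOME p. g = mpoly_eval p) ` G"
  have "g = mpoly_eval (SOME p. g = mpoly_eval p)" if "g \<in> G" for g
    using assms[OF that] unfolding poly_fun_def by (rule someI_ex)
  then have "{x \<in> ambient I. \<forall>g\<in>G. g x = 0} = {x \<in> ambient I. \<forall>p\<in>P. mpoly_eval p x = 0}"
    unfolding P_def by auto
  then show ?thesis unfolding zariski_closed_def by blast
qed

lemma zariski_closedE: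
  assumes "zariski_closed I S"
  obtains G where "\<And>g. g \<in> G \<Longrightarrow> poly_fun g" "S = {x \<in> ambient I. \<forall>g\<in>G. g x = 0}"
proof -
  from assms obtain F where "S = {x \<in> ambient I. \<forall>p\<in>F. mpoly_eval p x = 0}"
    unfolding zariski_closed_def by blast
  then show ?thesis by (intro that[of "mpoly_eval ` F"]) (auto simp: poly_fun_def)
qed

lemma zariski_closed_subset_ambient: "zariski_closed I S \<Longrightarrow> S \<subseteq> ambient I"
  unfolding zariski_closed_def by blast

lemma zariski_closed_ambient: "zariski_closed I (ambient I)"
  using zariski_closed_vanishing[of "{}" I] by simp

lemma zariski_closed_Inter:
  assumes "\<And>T. T \<in> \<T> \<Longrightarrow> zariski_closed I T"
  shows "zariski_closed I (ambient I \<inter> \<Inter>\<T>)"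
proof -
  define G where "G = {g. poly_fun g \<and> (\<forall>x\<in>\<Inter>\<T>. g x = 0)}"
  have "x \<in> T" if x: "x \<in> ambient I" "\<forall>g\<in>G. g x = 0" and T: "T \<in> \<T>" for x T
  proof -
    obtain H where H: "\<And>g. g \<in> H \<Longrightarrow> poly_fun g" "T = {x \<in> ambient I. \<forall>g\<in>H. g x = 0}"
      using zariski_closedE[OF assms[OF T]] by blast
    then have "H \<subseteq> G" using T unfolding G_def by blast
    with x H(2) show ?thesis by blast
  qed
  then have "ambient I \<inter> \<Inter>\<T> = {x \<in> ambient I. \<forall>g\<in>G. g x = 0}"
    unfolding G_def by blast
  moreover have "zariski_closed I {x \<in> ambient I. \<forall>g\<in>G. g x = 0}"
    by (rule zariski_closed_vanishing) (simp add: G_def)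
  ultimately show ?thesis by simp
qed

lemma zariski_closed_vanishing_within:
  assumes "zariski_closed I Y" "poly_fun f"
  shows "zariski_closed I {y \<in> Y. f y = 0}"
proof -
  obtain G where G: "\<And>g. g \<in> G \<Longrightarrow> poly_fun g" "Y = {x \<in> ambient I. \<forall>g\<in>G. g x = 0}"
    using zariski_closedE[OF assms(1)] by blast
  then have "{y \<in> Y. f y = 0} = {x \<in> ambient I. \<forall>g\<in>insert f G. g x = 0}" by auto
  then show ?thesis using zariski_closed_vanishing[of "insert f G" I] G assms(2) by auto
qed

lemma zariski_closed_preimage:
  assumes "zariski_closed I A" and "\<And>x. x \<in> ambient J \<Longrightarrow> F x \<in> ambient I"
    and "\<And>v. poly_fun (\<lambda>x. F x v)"
  shows "zariski_closed J {x \<in> ambient J. F x \<in> A}"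
proof -
  obtain G where G: "\<And>g. g \<in> G \<Longrightarrow> poly_fun g" "A = {x \<in> ambient I. \<forall>g\<in>G. g x = 0}"
    using zariski_closedE[OF assms(1)] by blast
  have "{x \<in> ambient J. F x \<in> A} = {x \<in> ambient J. \<forall>g\<in>(\<lambda>g x. g (F x)) ` G. g x = 0}"
    using G assms(2) by auto
  moreover have "zariski_closed J {x \<in> ambient J. \<forall>g\<in>(\<lambda>g x. g (F x)) ` G. g x = 0}"
  proof (rule zariski_closed_vanishing)
    fix g' assume "g' \<in> (\<lambda>g x. g (F x)) ` G"
    then obtain g where "g \<in> G" "g' = (\<lambda>x. g (F x))" by blast
    then show "poly_fun g'" using poly_fun_comp[OF G(1)[OF \<open>g \<in> G\<close>] assms(3)] by simp
  qed
  ultimately show ?thesis by simp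
qed

lemma zariski_closure_subset: "S \<subseteq> zariski_closure I S"
  unfolding zariski_closure_def by blast

lemma zariski_closure_minimal: "zariski_closed I T \<Longrightarrow> S \<subseteq> T \<Longrightarrow> zariski_closure I S \<subseteq> T"
  unfolding zariski_closure_def by blast

lemma zariski_closure_mono: "S \<subseteq> S' \<Longrightarrow> zariski_closure I S \<subseteq> zariski_closure I S'"
  unfolding zariski_closure_def by blast

lemma zariski_closureI:
  "(\<And>T. zariski_closed I T \<Longrightarrow> S \<subseteq> T \<Longrightarrow> x \<in> T) \<Longrightarrow> x \<in> zariski_closure I S"
  unfolding zariski_closure_def by blast

lemma zariski_closed_closure:
  assumes "S \<subseteq> ambient I"
  shows "zariski_closed I (zariski_closure I S)"
proof -
  have "zariski_closure I S = ambient I \<inter> \<Inter>{T. zariski_closed I T \<and> S \<subseteq> T}"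
    using zariski_closed_ambient[of I] assms unfolding zariski_closure_def by blast
  moreover have "zariski_closed I (ambient I \<inter> \<Inter>{T. zariski_closed I T \<and> S \<subseteq> T})"
    by (rule zariski_closed_Inter) blast
  ultimately show ?thesis by simp
qed

lemma zariski_closure_subset_ambient: "S \<subseteq> ambient I \<Longrightarrow> zariski_closure I S \<subseteq> ambient I"
  using zariski_closed_closure zariski_closed_subset_ambient by blast

lemma zariski_closure_eqI:
  assumes "S \<subseteq> S'" "S' \<subseteq> zariski_closure I S" "S \<subseteq> ambient I"
  shows "zariski_closure I S = zariski_closure I S'"
  using zariski_closure_mono[OF assms(1)]
    zariski_closure_minimal[OF zariski_closed_closure[OF assms(3)] assms(2)] by blast

lemma zariski_closure_vanishing:
  assumes "poly_fun f" "S \<subseteq> ambient I" "\<And>x. x \<in> S \<Longrightarrow> f x = 0"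
  shows "\<forall>x\<in>zariski_closure I S. f x = 0"
proof -
  have "zariski_closed I {x \<in> ambient I. \<forall>g\<in>{f}. g x = 0}"
    by (rule zariski_closed_vanishing) (use assms(1) in simp)
  then have "zariski_closure I S \<subseteq> {x \<in> ambient I. \<forall>g\<in>{f}. g x = 0}"
    by (rule zariski_closure_minimal) (use assms(2,3) in auto)
  then show ?thesis by blast
qed

lemma zariski_closure_image:
  assumes S: "S \<subseteq> ambient J"
    and R: "\<And>x. x \<in> ambient J \<Longrightarrow> R x \<in> ambient I" "\<And>v. poly_fun (\<lambda>x. R x v)"
    and R': "\<And>y. y \<in> ambient I \<Longrightarrow> R' y \<in> ambient J" "\<And>v. poly_fun (\<lambda>y. R' y v)"
    and inverse: "\<And>y. y \<in> ambient I \<Longrightarrow> R (R' y) = y" "\<And>x. x \<in> ambient J \<Longrightarrow> R' (R x) = x"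
  shows "R ` zariski_closure J S = zariski_closure I (R ` S)"
proof (intro equalityI subsetI)
  fix y assume "y \<in> R ` zariski_closure J S"
  then obtain x where x: "x \<in> zariski_closure J S" "y = R x" by blast
  show "y \<in> zariski_closure I (R ` S)"
  proof (rule zariski_closureI)
    fix A assume A: "zariski_closed I A" "R ` S \<subseteq> A"
    have "zariski_closure J S \<subseteq> {x \<in> ambient J. R x \<in> A}"
      by (rule zariski_closure_minimal[OF zariski_closed_preimage[OF A(1) R]]) (use S A(2) in auto)
    then show "y \<in> A" using x by blast
  qed
next
  fix y assume y: "y \<in> zariski_closure I (R ` S)"
  have RS: "R ` S \<subseteq> ambient I" using S R(1) by blast
  have "R' y \<in> zariski_closure J S"
  proof (rule zariski_closureI)
    fix T assume T: "zariski_closed J T" "S \<subseteq> T"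
    have "R ` S \<subseteq> {y \<in> ambient I. R' y \<in> T}" using S T(2) R(1) inverse(2) by force
    moreover have "zariski_closed I {y \<in> ambient I. R' y \<in> T}"
      using zariski_closed_preimage[OF T(1)] R' by blast
    ultimately have "zariski_closure I (R ` S) \<subseteq> {y \<in> ambient I. R' y \<in> T}"
      by (intro zariski_closure_minimal)
    then show "R' y \<in> T" using y by blast
  qed
  moreover have "y = R (R' y)" using inverse(1) zariski_closure_subset_ambient[OF RS] y by auto
  ultimately show "y \<in> R ` zariski_closure J S" by blast
qed

lemma irreducible_closed_imp_closed: "irreducible_closed I Y \<Longrightarrow> zariski_closed I Y"
  unfolding irreducible_closed_def by blast

lemma irreducible_closed_mult_eq_0:
  assumes Y: "irreducible_closed I Y" and f: "poly_fun f" and g: "poly_fun g"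
    and fg: "\<And>y. y \<in> Y \<Longrightarrow> f y * g y = 0" and "y0 \<in> Y" "f y0 \<noteq> 0" and "y \<in> Y"
  shows "g y = 0"
proof -
  note closed = irreducible_closed_imp_closed[OF Y]
  have "Y = {y \<in> Y. f y = 0} \<union> {y \<in> Y. g y = 0}" using fg by auto
  then have "Y = {y \<in> Y. f y = 0} \<or> Y = {y \<in> Y. g y = 0}"
    using Y zariski_closed_vanishing_within[OF closed f] zariski_closed_vanishing_within[OF closed g]
    unfolding irreducible_closed_def by blast
  with assms(5-7) show ?thesis by blast
qed

text \<open>The hypothesis says that the polynomials vanishing on \<open>S\<close> form a prime ideal.\<close>

lemma irreducible_closed_closureI:
  assumes S: "S \<subseteq> ambient I" "S \<noteq> {}"
    and mult: "\<And>f g. poly_fun f \<Longrightarrow> poly_fun g \<Longrightarrow> \<exists>x\<in>S. f x \<noteq> 0 \<Longrightarrow> \<exists>x\<in>S. g x \<noteq> 0 \<Longrightarrow>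
              \<exists>x\<in>S. f x * g x \<noteq> 0"
  shows "irreducible_closed I (zariski_closure I S)"
  unfolding irreducible_closed_def
proof (intro conjI allI impI)
  let ?W = "zariski_closure I S"
  show "zariski_closed I ?W" by (rule zariski_closed_closure[OF S(1)])
  show "?W \<noteq> {}" using S zariski_closure_subset[of S I] by auto
  fix A B assume AB: "zariski_closed I A \<and> zariski_closed I B \<and> ?W = A \<union> B"
  show "?W = A \<or> ?W = B"
  proof (rule ccontr)
    assume "\<not> (?W = A \<or> ?W = B)"
    then have "\<not> S \<subseteq> A" "\<not> S \<subseteq> B" using AB zariski_closure_minimal by blast+
    then obtain x1 x2 where x: "x1 \<in> S" "x1 \<notin> A" "x2 \<in> S" "x2 \<notin> B" by blast
    obtain GA where GA: "\<And>g. g \<in> GA \<Longrightarrow> poly_fun g" "A = {x \<in> ambient I. \<forall>g\<in>GA. g x = 0}"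
      using zariski_closedE[of I A] AB by blast
    obtain GB where GB: "\<And>g. g \<in> GB \<Longrightarrow> poly_fun g" "B = {x \<in> ambient I. \<forall>g\<in>GB. g x = 0}"
      using zariski_closedE[of I B] AB by blast
    obtain g h where "g \<in> GA" "g x1 \<noteq> 0" "h \<in> GB" "h x2 \<noteq> 0" using x GA GB S by auto
    then obtain x where "x \<in> S" "g x * h x \<noteq> 0" using mult[OF GA(1) GB(1)] x by blast
    moreover have "x \<in> A \<union> B" using \<open>x \<in> S\<close> zariski_closure_subset[of S I] AB by blast
    ultimately show False using GA GB \<open>g \<in> GA\<close> \<open>h \<in> GB\<close> by auto
  qed
qed

lemma irreducible_closed_singleton:
  assumes "zariski_closed I {x}"
  shows "irreducible_closed I {x}"
  unfolding irreducible_closed_def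
proof (intro conjI allI impI)
  fix A B assume "zariski_closed I A \<and> zariski_closed I B \<and> {x} = A \<union> B"
  then show "{x} = A \<or> {x} = B" by (cases "x \<in> A") auto
qed (use assms in auto)

lemma zariski_closed_origin: "zariski_closed I {\<lambda>v. 0}"
proof -
  have "{\<lambda>v. 0} = {x \<in> ambient I. \<forall>g\<in>range (\<lambda>v x. x v). g x = 0}"
    unfolding ambient_def by (auto simp: fun_eq_iff)
  moreover have "zariski_closed I {x \<in> ambient I. \<forall>g\<in>range (\<lambda>v x. x v). g x = 0}"
    by (rule zariski_closed_vanishing) (auto simp: poly_fun_coord)
  ultimately show ?thesis by simp
qed

lemma poly_eq_0_cofinite:
  fixes p :: "complex poly"
  assumes "finite E" "\<And>s. s \<notin> E \<Longrightarrow> poly p s = 0"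
  shows "poly p s0 = 0"
proof (cases "p = 0")
  case False
  have "UNIV \<subseteq> E \<union> {s. poly p s = 0}" using assms(2) by blast
  then have "finite (UNIV :: complex set)"
    using assms(1) poly_roots_finite[OF False] by (meson finite_Un finite_subset)
  then show ?thesis using infinite_UNIV_char_0 by blast
qed simp

lemma zariski_closure_polynomial_curve:
  assumes "finite E" "\<And>s. s \<notin> E \<Longrightarrow> L s \<in> S" "\<And>v. (\<lambda>s. L s v) \<in> range poly"
    and "L s0 \<in> ambient I"
  shows "L s0 \<in> zariski_closure I S"
proof (rule zariski_closureI)
  fix T assume T: "zariski_closed I T" "S \<subseteq> T"
  obtain G where G: "\<And>g. g \<in> G \<Longrightarrow> poly_fun g" "T = {x \<in> ambient I. \<forall>g\<in>G. g x = 0}"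
    using zariski_closedE[OF T(1)] by blast
  have "g (L s0) = 0" if g: "g \<in> G" for g
  proof -
    obtain p where p: "(\<lambda>s. g (L s)) = poly p"
      using fun_subalgebra_poly_fun_comp[OF fun_subalgebra_poly G(1)[OF g], of L] assms(3) by blast
    have "poly p s = 0" if "s \<notin> E" for s
    proof -
      have "L s \<in> T" using assms(2)[OF that] T(2) by blast
      then show ?thesis using G(2) g fun_cong[OF p, of s] by force
    qed
    then show ?thesis using poly_eq_0_cofinite[OF assms(1)] fun_cong[OF p, of s0] by simp
  qed
  then show "L s0 \<in> T" using G(2) assms(4) by blast
qed

lemma irreducible_closed_closure_polynomial_curves:
  fixes S :: "('i \<Rightarrow> complex) set"
  assumes "S \<subseteq> ambient I" "S \<noteq> {}"
    and curves: "\<And>x y. x \<in> S \<Longrightarrow> y \<in> S \<Longrightarrow>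
      \<exists>L. L 0 = x \<and> L 1 = y \<and> range L \<subseteq> S \<and> (\<forall>v. (\<lambda>s. L s v) \<in> range poly)"
  shows "irreducible_closed I (zariski_closure I S)"
proof (rule irreducible_closed_closureI[OF assms(1,2)])
  fix f g :: "('i \<Rightarrow> complex) \<Rightarrow> complex"
  assume f: "poly_fun f" and g: "poly_fun g"
  assume "\<exists>x\<in>S. f x \<noteq> 0" "\<exists>y\<in>S. g y \<noteq> 0"
  then obtain x y where xy: "x \<in> S" "y \<in> S" "f x \<noteq> 0" "g y \<noteq> 0" by blast
  obtain L where L: "L 0 = x" "L 1 = y" "range L \<subseteq> S" "\<And>v. (\<lambda>s. L s v) \<in> range poly"
    using curves[OF xy(1,2)] by blast
  obtain p where p: "(\<lambda>s. f (L s)) = poly p"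
    using fun_subalgebra_poly_fun_comp[OF fun_subalgebra_poly f, of L] L(4) by blast
  obtain q where q: "(\<lambda>s. g (L s)) = poly q"
    using fun_subalgebra_poly_fun_comp[OF fun_subalgebra_poly g, of L] L(4) by blast
  have "p \<noteq> 0" "q \<noteq> 0"
    using fun_cong[OF p, of 0] fun_cong[OF q, of 1] xy(3,4) L(1,2) by auto
  then obtain s where "poly (p * q) s \<noteq> 0" using poly_all_0_iff_0[of "p * q"] by auto
  moreover have "L s \<in> S" using L(3) by blast
  ultimately show "\<exists>x\<in>S. f x * g x \<noteq> 0" using fun_cong[OF p, of s] fun_cong[OF q, of s] by force
qed

section \<open>Hilbert functions and the length of chains\<close>

definition lin_indep_on :: "'a set \<Rightarrow> (nat \<Rightarrow> 'a \<Rightarrow> complex) \<Rightarrow> nat \<Rightarrow> bool" where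
  "lin_indep_on Y q m \<longleftrightarrow> (\<forall>\<alpha>. (\<forall>x\<in>Y. (\<Sum>j<m. \<alpha> j * q j x) = 0) \<longrightarrow> (\<forall>j<m. \<alpha> j = 0))"

definition indep_poly_funs :: "('i \<Rightarrow> complex) set \<Rightarrow> nat \<Rightarrow> nat \<Rightarrow> bool" where
  "indep_poly_funs Y D m \<longleftrightarrow> (\<exists>q. (\<forall>j<m. poly_fun_deg D (q j)) \<and> lin_indep_on Y q m)"

text \<open>\<open>hilbert_bound Y r B\<close>: the Hilbert function of \<open>Y\<close>, the dimension of the space of restrictions
  to \<open>Y\<close> of polynomials of degree at most \<open>D\<close>, is at most \<open>B D\<^sup>r\<close>.\<close>

definition hilbert_bound :: "('i \<Rightarrow> complex) set \<Rightarrow> nat \<Rightarrow> real \<Rightarrow> bool" where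
  "hilbert_bound Y r B \<longleftrightarrow> (\<forall>D\<ge>1. \<forall>m. indep_poly_funs Y D m \<longrightarrow> real m \<le> B * real D ^ r)"

lemma indep_poly_funs_0: "indep_poly_funs Y D 0"
  unfolding indep_poly_funs_def lin_indep_on_def by simp

lemma indep_poly_funs_1: "x \<in> Y \<Longrightarrow> indep_poly_funs Y D 1"
  unfolding indep_poly_funs_def lin_indep_on_def
  by (rule exI[of _ "\<lambda>j x. 1"]) (auto intro: poly_fun_deg_const)

lemma indep_poly_funs_mono_deg: "D \<le> D' \<Longrightarrow> indep_poly_funs Y D m \<Longrightarrow> indep_poly_funs Y D' m"
  unfolding indep_poly_funs_def using poly_fun_deg_mono by blast

lemma indep_poly_funs_mono_set: "X \<subseteq> Y \<Longrightarrow> indep_poly_funs X D m \<Longrightarrow> indep_poly_funs Y D m"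
  unfolding indep_poly_funs_def lin_indep_on_def by blast

lemma hilbert_bound_subset: "X \<subseteq> Y \<Longrightarrow> hilbert_bound Y r B \<Longrightarrow> hilbert_bound X r B"
  unfolding hilbert_bound_def using indep_poly_funs_mono_set by blast

lemma sum_lessThan_add:
  "(\<Sum>j<s + u. f j) = (\<Sum>j<s. f j) + (\<Sum>l<u. f (s + l) :: 'a::comm_monoid_add)" for s u :: nat
  by (induction u) (simp_all add: add.assoc)

lemma lin_indep_on_append_mult:
  assumes q: "lin_indep_on X q s" and g: "lin_indep_on Y g u" and "X \<subseteq> Y"
    and f: "\<And>x. x \<in> X \<Longrightarrow> f x = 0"
    and cancel: "\<And>\<beta>. \<forall>x\<in>Y. f x * (\<Sum>l<u. \<beta> l * g l x) = 0 \<Longrightarrow> \<forall>x\<in>Y. (\<Sum>l<u. \<beta> l * g l x) = 0"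
  shows "lin_indep_on Y (\<lambda>j. if j < s then q j else (\<lambda>x. f x * g (j - s) x)) (s + u)"
  unfolding lin_indep_on_def
proof (rule allI, rule impI)
  fix \<alpha>
  assume A: "\<forall>x\<in>Y. (\<Sum>j<s + u. \<alpha> j * (if j < s then q j else (\<lambda>x. f x * g (j - s) x)) x) = 0"
  define G where "G = (\<lambda>x. \<Sum>l<u. \<alpha> (s + l) * g l x)"
  have split: "(\<Sum>j<s + u. \<alpha> j * (if j < s then q j else (\<lambda>x. f x * g (j - s) x)) x) =
      (\<Sum>j<s. \<alpha> j * q j x) + f x * G x" for x
    unfolding sum_lessThan_add G_def by (simp add: sum_distrib_left algebra_simps)
  have "(\<Sum>j<s. \<alpha> j * q j x) = 0" if "x \<in> X" for x
    using A split[of x] f[OF that] assms(3) that by auto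
  then have low: "\<forall>j<s. \<alpha> j = 0" using q unfolding lin_indep_on_def by blast
  then have "\<forall>x\<in>Y. f x * G x = 0" using A split by simp
  then have "\<forall>x\<in>Y. G x = 0" unfolding G_def by (rule cancel)
  then have high: "\<forall>l<u. \<alpha> (s + l) = 0"
    using g[unfolded lin_indep_on_def, rule_format, of "\<lambda>l. \<alpha> (s + l)"] unfolding G_def by blast
  show "\<forall>j<s + u. \<alpha> j = 0"
  proof (intro allI impI)
    fix j assume "j < s + u"
    then show "\<alpha> j = 0" using low high[rule_format, of "j - s"] by (cases "j < s") auto
  qed
qed

text \<open>If \<open>X \<subset> Y\<close> with \<open>Y\<close> irreducible, pick \<open>f\<close> vanishing on \<open>X\<close> but not on \<open>Y\<close>:
  functions independent on \<open>X\<close> together with \<open>f\<close> times functions independent on \<open>Y\<close>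
  remain independent on \<open>Y\<close>.\<close>

lemma indep_poly_funs_extend:
  assumes Y: "irreducible_closed I Y" and X: "zariski_closed I X" and XY: "X \<subset> Y"
  obtains e where "\<And>D s u. indep_poly_funs X D s \<Longrightarrow> indep_poly_funs Y D u \<Longrightarrow>
    indep_poly_funs Y (D + e) (s + u)"
proof -
  obtain y0 where y0: "y0 \<in> Y" "y0 \<notin> X" using XY by blast
  have "y0 \<in> ambient I"
    using zariski_closed_subset_ambient[OF irreducible_closed_imp_closed[OF Y]] y0(1) by blast
  moreover obtain G where G: "\<And>g. g \<in> G \<Longrightarrow> poly_fun g" "X = {x \<in> ambient I. \<forall>g\<in>G. g x = 0}"
    using zariski_closedE[OF X] by blast
  ultimately obtain f where f: "f \<in> G" "f y0 \<noteq> 0" using y0 by blast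
  obtain e where e: "poly_fun_deg e f" using G(1)[OF f(1)] by (rule poly_fun_imp_poly_fun_deg)
  have "indep_poly_funs Y (D + e) (s + u)"
    if Xs: "indep_poly_funs X D s" and Yu: "indep_poly_funs Y D u" for D s u
  proof -
    obtain q where q: "\<And>j. j < s \<Longrightarrow> poly_fun_deg D (q j)" "lin_indep_on X q s"
      using Xs unfolding indep_poly_funs_def by blast
    obtain g where g: "\<And>j. j < u \<Longrightarrow> poly_fun_deg D (g j)" "lin_indep_on Y g u"
      using Yu unfolding indep_poly_funs_def by blast
    define h where "h = (\<lambda>j. if j < s then q j else (\<lambda>x. f x * g (j - s) x))"
    have deg: "poly_fun_deg (D + e) (h j)" if "j < s + u" for j
    proof (cases "j < s")
      case True
      then show ?thesis using poly_fun_deg_mono[OF _ q(1)[OF True], of "D + e"] by (simp add: h_def)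
    next
      case False
      then show ?thesis
        using poly_fun_deg_mult[OF e g(1), of "j - s"] that by (simp add: h_def add.commute)
    qed
    have cancel: "\<forall>x\<in>Y. (\<Sum>l<u. \<beta> l * g l x) = 0"
      if fG: "\<forall>x\<in>Y. f x * (\<Sum>l<u. \<beta> l * g l x) = 0" for \<beta>
    proof -
      have "poly_fun (\<lambda>x. \<Sum>l<u. \<beta> l * g l x)"
        by (intro poly_fun_deg_imp_poly_fun[of D] poly_fun_deg_sum poly_fun_deg_scale g(1)) auto
      from irreducible_closed_mult_eq_0[OF Y G(1)[OF f(1)] this _ y0(1) f(2)] fG show ?thesis
        by blast
    qed
    have "\<And>x. x \<in> X \<Longrightarrow> f x = 0" using G(2) f(1) by blast
    with XY have "lin_indep_on Y h (s + u)"
      unfolding h_def by (intro lin_indep_on_append_mult[OF q(2) g(2) _ _ cancel]) auto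
    with deg show ?thesis unfolding indep_poly_funs_def by blast
  qed
  then show ?thesis by (rule that)
qed

lemma indep_poly_funs_iterate:
  assumes extend: "\<And>D s u. indep_poly_funs X D s \<Longrightarrow> indep_poly_funs Y D u \<Longrightarrow>
      indep_poly_funs Y (D + e) (s + u)"
    and X: "indep_poly_funs X E s"
  shows "indep_poly_funs Y (E + j * e) (j * s)"
proof (induction j)
  case (Suc j)
  have "indep_poly_funs X (E + j * e) s" using indep_poly_funs_mono_deg[OF _ X] by simp
  from extend[OF this Suc.IH] show ?case by (simp add: algebra_simps)
qed (simp add: indep_poly_funs_0)

text \<open>Taking \<open>j = D\<close> copies in the previous lemma: the Hilbert function of a proper closed
  subset of an irreducible set grows by one power of \<open>D\<close> less.\<close>

lemma hilbert_bound_proper_subset: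
  assumes Y: "irreducible_closed I Y" and X: "zariski_closed I X" and XY: "X \<subset> Y"
    and bound: "hilbert_bound Y (Suc r) B"
  obtains B' where "hilbert_bound X r B'"
proof -
  obtain e where extend: "\<And>D s u. indep_poly_funs X D s \<Longrightarrow> indep_poly_funs Y D u \<Longrightarrow>
      indep_poly_funs Y (D + e) (s + u)"
    using indep_poly_funs_extend[OF Y X XY] by blast
  have "hilbert_bound X r (B * (1 + real e) ^ Suc r)"
    unfolding hilbert_bound_def
  proof (intro allI impI)
    fix D m assume D: "1 \<le> D" and Xm: "indep_poly_funs X D m"
    have Ym: "indep_poly_funs Y (D + D * e) (D * m)" by (rule indep_poly_funs_iterate[OF extend Xm])
    have "real (D * m) \<le> B * real (D + D * e) ^ Suc r"
      using bound[unfolded hilbert_bound_def, rule_format, OF _ Ym] D by simp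
    also have "real (D + D * e) = real D * (1 + real e)" by (simp add: algebra_simps)
    also have "B * (real D * (1 + real e)) ^ Suc r = real D * (B * (1 + real e) ^ Suc r * real D ^ r)"
      by (simp only: power_mult_distrib power_Suc mult_ac)
    finally show "real m \<le> B * (1 + real e) ^ Suc r * real D ^ r"
      using D by (simp add: mult_le_cancel_left)
  qed
  then show ?thesis by (rule that)
qed

lemma hilbert_bound_0_proper_subset:
  assumes Y: "irreducible_closed I Y" and X: "zariski_closed I X" and XY: "X \<subset> Y"
    and bound: "hilbert_bound Y 0 B"
  shows "X = {}"
proof (rule ccontr)
  assume "X \<noteq> {}"
  then obtain x where x: "x \<in> X" by blast
  obtain e where extend: "\<And>D s u. indep_poly_funs X D s \<Longrightarrow> indep_poly_funs Y D u \<Longrightarrow>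
      indep_poly_funs Y (D + e) (s + u)"
    using indep_poly_funs_extend[OF Y X XY] by blast
  define D where "D = nat \<lceil>B\<rceil> + 1"
  have "indep_poly_funs Y (D + D * e) (D * 1)"
    by (rule indep_poly_funs_iterate[OF extend indep_poly_funs_1[OF x]])
  then have "real D \<le> B" using bound unfolding hilbert_bound_def D_def by force
  then show False unfolding D_def by linarith
qed

lemma chain_length_le_hilbert_bound:
  assumes "\<forall>j\<le>k. irreducible_closed I (C j)" "\<forall>j<k. C j \<subset> C (Suc j)" "hilbert_bound (C k) r B"
  shows "k \<le> r"
  using assms
proof (induction k arbitrary: r B)
  case (Suc k)
  have Y: "irreducible_closed I (C (Suc k))" and XY: "C k \<subset> C (Suc k)"
    using Suc.prems by auto
  have X: "zariski_closed I (C k)"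
    by (rule irreducible_closed_imp_closed) (use Suc.prems(1) in simp)
  show ?case
  proof (cases r)
    case 0
    then have "C k = {}" using hilbert_bound_0_proper_subset[OF Y X XY] Suc.prems(3) by simp
    then show ?thesis using Suc.prems(1) unfolding irreducible_closed_def by auto
  next
    case (Suc r')
    then obtain B' where "hilbert_bound (C k) r' B'"
      using hilbert_bound_proper_subset[OF Y X XY] Suc.prems(3) by blast
    then have "k \<le> r'" using Suc.IH Suc.prems(1,2) by simp
    then show ?thesis using Suc by simp
  qed
qed simp

lemma krull_dim_eqI:
  fixes V :: "('i \<Rightarrow> complex) set"
  assumes bound: "hilbert_bound V r B"
    and chain: "\<forall>j\<le>r. irreducible_closed I (C j) \<and> C j \<subseteq> V" "\<forall>j<r. C j \<subset> C (Suc j)"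
  shows "krull_dim I V = r"
proof -
  define K where "K = {k. \<exists>C :: nat \<Rightarrow> ('i \<Rightarrow> complex) set.
      (\<forall>j\<le>k. irreducible_closed I (C j) \<and> C j \<subseteq> V) \<and> (\<forall>j<k. C j \<subset> C (Suc j))}"
  have "k \<le> r" if k: "k \<in> K" for k
  proof -
    obtain C' where C': "\<forall>j\<le>k. irreducible_closed I (C' j) \<and> C' j \<subseteq> V"
      "\<forall>j<k. C' j \<subset> C' (Suc j)"
      using k unfolding K_def by blast
    then show ?thesis
      using chain_length_le_hilbert_bound[of k I C' r B] hilbert_bound_subset[OF _ bound, of "C' k"]
      by auto
  qed
  moreover have "r \<in> K" using chain unfolding K_def by blast
  ultimately have "Sup K = r" by (intro cSup_eq_maximum) auto
  then show ?thesis unfolding krull_dim_def K_def .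
qed

lemma sum_fun_apply: "(\<Sum>i\<in>A. F i) z = (\<Sum>i\<in>A. F i z)"
  by (induction A rule: infinite_finite_induct) auto

definition fscale :: "complex \<Rightarrow> ('a \<Rightarrow> complex) \<Rightarrow> 'a \<Rightarrow> complex" where
  "fscale c f = (\<lambda>z. c * f z)"

interpretation fun_space: vector_space "fscale :: complex \<Rightarrow> ('a \<Rightarrow> complex) \<Rightarrow> 'a \<Rightarrow> complex"
  by unfold_locales (auto simp: fscale_def fun_eq_iff algebra_simps)

lemma lin_indep_on_UNIV_inj_on:
  assumes "lin_indep_on UNIV f m"
  shows "inj_on f {..<m}"
proof (rule inj_onI, rule ccontr)
  fix i j assume ij: "i \<in> {..<m}" "j \<in> {..<m}" "f i = f j" "i \<noteq> j"
  define \<alpha> where "\<alpha> = (\<lambda>l. if l = i then (1::complex) else if l = j then -1 else 0)"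
  have "(\<Sum>l<m. \<alpha> l * f l z) = 0" for z
  proof -
    have "(\<Sum>l<m. \<alpha> l * f l z) = (\<Sum>l\<in>{i, j}. \<alpha> l * f l z)"
      by (rule sum.mono_neutral_right) (use ij in \<open>auto simp: \<alpha>_def\<close>)
    also have "\<dots> = 0" using ij by (simp add: \<alpha>_def)
    finally show ?thesis .
  qed
  then have "\<alpha> i = 0" using assms[unfolded lin_indep_on_def, THEN spec, of \<alpha>] ij by blast
  then show False by (simp add: \<alpha>_def)
qed

lemma lin_indep_on_UNIV_independent:
  assumes "lin_indep_on UNIV f m"
  shows "fun_space.independent (f ` {..<m})"
proof
  assume "fun_space.dependent (f ` {..<m})"
  then obtain t u where t: "finite t" "t \<subseteq> f ` {..<m}" "(\<Sum>v\<in>t. fscale (u v) v) = 0" "\<exists>v\<in>t. u v \<noteq> 0"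
    unfolding fun_space.dependent_explicit by blast
  define \<alpha> where "\<alpha> = (\<lambda>j. if f j \<in> t then u (f j) else 0)"
  have "(\<Sum>j<m. \<alpha> j * f j z) = 0" for z
  proof -
    have "(\<Sum>j<m. \<alpha> j * f j z) = (\<Sum>j\<in>{j. j < m \<and> f j \<in> t}. u (f j) * f j z)"
      by (rule sum.mono_neutral_cong_right) (auto simp: \<alpha>_def)
    also have "\<dots> = (\<Sum>v\<in>f ` {j. j < m \<and> f j \<in> t}. u v * v z)"
      by (rule sum.reindex[symmetric, unfolded comp_def])
        (rule inj_on_subset[OF lin_indep_on_UNIV_inj_on[OF assms]], auto)
    also have "f ` {j. j < m \<and> f j \<in> t} = t" using t(2) by auto
    also have "(\<Sum>v\<in>t. u v * v z) = (\<Sum>v\<in>t. fscale (u v) v) z"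
      by (simp add: sum_fun_apply fscale_def)
    finally show ?thesis using t(3) by simp
  qed
  then have "\<forall>j<m. \<alpha> j = 0" using assms[unfolded lin_indep_on_def, THEN spec, of \<alpha>] by blast
  moreover obtain v where "v \<in> t" "u v \<noteq> 0" using t(4) by blast
  moreover obtain j where "j < m" "v = f j" using t(2) \<open>v \<in> t\<close> by blast
  ultimately show False by (auto simp: \<alpha>_def)
qed

lemma lin_indep_on_UNIV_card_le:
  assumes "finite B" "\<And>j. j < m \<Longrightarrow> f j \<in> fun_space.span B" "lin_indep_on UNIV f m"
  shows "m \<le> card B"
proof -
  have "f ` {..<m} \<subseteq> fun_space.span B" using assms(2) by blast
  then have "card (f ` {..<m}) \<le> card B"
    using fun_space.independent_span_bound[OF assms(1) lin_indep_on_UNIV_independent[OF assms(3)]]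
    by blast
  then show ?thesis using card_image[OF lin_indep_on_UNIV_inj_on[OF assms(3)]] by simp
qed

section \<open>Index vectors of the staircase partition\<close>

abbreviation perm_lists :: "nat \<Rightarrow> nat list set" where
  "perm_lists n \<equiv> permutations_of_set {..<n}"

lemma mset_eq_iff_length_and_filter_neq:
  "mset xs = mset ys \<longleftrightarrow>
     length xs = length ys \<and> mset (filter (\<lambda>x. x \<noteq> a) xs) = mset (filter (\<lambda>x. x \<noteq> a) ys)"
proof
  have decomp: "mset zs = mset (filter (\<lambda>x. x \<noteq> a) zs) +
      replicate_mset (length zs - length (filter (\<lambda>x. x \<noteq> a) zs)) a" for zs :: "'a list"
  proof -
    have "mset zs = mset (filter (\<lambda>x. x \<noteq> a) zs) + mset (filter (\<lambda>x. x = a) zs)"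
      using multiset_partition[of "mset zs" "\<lambda>x. x \<noteq> a"] by simp
    also have "mset (filter (\<lambda>x. x = a) zs) = replicate_mset (length (filter (\<lambda>x. x = a) zs)) a"
      by (induction zs) auto
    also have "length (filter (\<lambda>x. x = a) zs) = length zs - length (filter (\<lambda>x. x \<noteq> a) zs)"
      using sum_length_filter_compl[of "\<lambda>x. x \<noteq> a" zs] by simp
    finally show ?thesis .
  qed
  assume "length xs = length ys \<and> mset (filter (\<lambda>x. x \<noteq> a) xs) = mset (filter (\<lambda>x. x \<noteq> a) ys)"
  then have len: "length xs = length ys" and filt: "mset (filter (\<lambda>x. x \<noteq> a) xs) = mset (filter (\<lambda>x. x \<noteq> a) ys)"
    by simp_all
  have "mset xs = mset (filter (\<lambda>x. x \<noteq> a) xs) +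
      replicate_mset (length xs - length (filter (\<lambda>x. x \<noteq> a) xs)) a" by (rule decomp)
  also have "\<dots> = mset (filter (\<lambda>x. x \<noteq> a) ys) +
      replicate_mset (length ys - length (filter (\<lambda>x. x \<noteq> a) ys)) a"
    by (simp only: len filt mset_eq_length[OF filt])
  also have "\<dots> = mset ys" by (rule decomp[symmetric])
  finally show "mset xs = mset ys" .
next
  assume eq: "mset xs = mset ys"
  then show "length xs = length ys \<and>
      mset (filter (\<lambda>x. x \<noteq> a) xs) = mset (filter (\<lambda>x. x \<noteq> a) ys)"
    by (simp add: mset_eq_length[OF eq])
qed

lemma mset_eq_mset_upt_iff: "mset xs = mset [0..<n] \<longleftrightarrow> xs \<in> perm_lists n"
proof
  assume eq: "mset xs = mset [0..<n]"
  have "set xs = {..<n}" using mset_eq_setD[OF eq] by (simp add: atLeast0LessThan)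
  moreover have "distinct xs" using mset_eq_imp_distinct_iff[OF eq] by simp
  ultimately show "xs \<in> perm_lists n" by (rule permutations_of_setI)
next
  assume "xs \<in> perm_lists n"
  then have "distinct xs" "set xs = set [0..<n]"
    by (auto simp: permutations_of_set_def atLeast0LessThan)
  then show "mset xs = mset [0..<n]" by (metis distinct_upt set_eq_iff_mset_eq_distinct)
qed

lemma N_lambda_staircase: "N_lambda n (staircase n) = perm_lists n"
proof -
  have "filter (\<lambda>i. i \<noteq> 0) [0..<n] = [1..<n]"
    by (cases n) (auto simp: upt_conv_Cons filter_id_conv)
  then have "xs \<in> N_lambda n (staircase n) \<longleftrightarrow> mset xs = mset [0..<n]" for xs
    using mset_eq_iff_length_and_filter_neq[of xs "[0..<n]" 0]
    by (simp add: N_lambda_def staircase_def)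
  then show ?thesis using mset_eq_mset_upt_iff by blast
qed

lemma perm_lists_length: "v \<in> perm_lists n \<Longrightarrow> length v = n"
  using length_finite_permutations_of_set by fastforce

lemma perm_lists_nth_less: "v \<in> perm_lists n \<Longrightarrow> k < n \<Longrightarrow> v ! k < n"
  using perm_lists_length[of v n] permutations_of_setD(1)[of v] by (metis lessThan_iff nth_mem)

lemma perm_lists_nth_eq_iff:
  "v \<in> perm_lists n \<Longrightarrow> k < n \<Longrightarrow> k' < n \<Longrightarrow> v ! k = v ! k' \<longleftrightarrow> k = k'"
  using perm_lists_length[of v n] permutations_of_setD(2)[of v] nth_eq_iff_index_eq by metis

lemma perm_lists_nth_surj: "v \<in> perm_lists n \<Longrightarrow> b < n \<Longrightarrow> \<exists>k<n. v ! k = b"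
  using perm_lists_length[of v n] permutations_of_setD(1)[of v] by (metis in_set_conv_nth lessThan_iff)

lemma map_upt_in_perm_lists:
  assumes "f ` {..<n} \<subseteq> {..<n}" "inj_on f {..<n}"
  shows "map f [0..<n] \<in> perm_lists n"
proof
  show "set (map f [0..<n]) = {..<n}"
    using assms endo_inj_surj[of "{..<n}" f] by (simp add: atLeast0LessThan)
  show "distinct (map f [0..<n])" using assms(2) by (simp add: distinct_map atLeast0LessThan)
qed

lemma ident_matrix_eq_perm_matrix:
  assumes v: "v \<in> perm_lists n"
  defines "\<sigma> \<equiv> \<lambda>a. if a < n then v ! a else a"
  shows "\<sigma> permutes {..<n}" "ident_matrix n v = perm_matrix n \<sigma>"
proof -
  have "inj_on \<sigma> {..<n}" using perm_lists_nth_eq_iff[OF v] by (auto simp: \<sigma>_def inj_on_def)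
  moreover have "\<sigma> ` {..<n} \<subseteq> {..<n}" using perm_lists_nth_less[OF v] by (auto simp: \<sigma>_def)
  ultimately have "bij_betw \<sigma> {..<n} {..<n}" by (simp add: bij_betw_def endo_inj_surj)
  then show "\<sigma> permutes {..<n}" by (rule bij_imp_permutes) (simp add: \<sigma>_def)
  show "ident_matrix n v = perm_matrix n \<sigma>"
    unfolding ident_matrix_def perm_matrix_def \<sigma>_def by (auto simp: fun_eq_iff)
qed

lemma bij_betw_ident_matrix: "bij_betw (ident_matrix n) (perm_lists n) (perm_matrices n)"
  unfolding bij_betw_def
proof
  show "inj_on (ident_matrix n) (perm_lists n)"
  proof (rule inj_onI)
    fix v w assume v: "v \<in> perm_lists n" and w: "w \<in> perm_lists n"
      and eq: "ident_matrix n v = ident_matrix n w"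
    have "v ! a = w ! a" if a: "a < n" for a
      using fun_cong[OF eq, of "(a, v ! a)"] perm_lists_nth_less[OF v a] a
      by (auto simp: ident_matrix_def split: if_splits)
    then show "v = w" using perm_lists_length[OF v] perm_lists_length[OF w] by (auto intro: nth_equalityI)
  qed
  show "ident_matrix n ` perm_lists n = perm_matrices n"
  proof (intro equalityI subsetI)
    fix P assume "P \<in> ident_matrix n ` perm_lists n"
    then show "P \<in> perm_matrices n"
      unfolding perm_matrices_def using ident_matrix_eq_perm_matrix by blast
  next
    fix P assume "P \<in> perm_matrices n"
    then obtain \<sigma> where \<sigma>: "\<sigma> permutes {..<n}" "P = perm_matrix n \<sigma>"
      unfolding perm_matrices_def by blast
    then have "map \<sigma> [0..<n] \<in> perm_lists n"
      by (intro map_upt_in_perm_lists) (auto simp: permutes_image permutes_inj_on)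
    moreover have "ident_matrix n (map \<sigma> [0..<n]) = P"
      unfolding \<sigma>(2) ident_matrix_def perm_matrix_def by (auto simp: fun_eq_iff)
    ultimately show "P \<in> ident_matrix n ` perm_lists n" by blast
  qed
qed

section \<open>Parametrisations of the moment variety\<close>

definition moment_point :: "nat \<Rightarrow> complex \<Rightarrow> (nat \<Rightarrow> nat \<Rightarrow> complex) \<Rightarrow> nat list \<Rightarrow> complex" where
  "moment_point n c \<mu> = (\<lambda>is. if is \<in> perm_lists n then c * moment_coord n \<mu> is else 0)"

definition toric_point :: "nat \<Rightarrow> complex \<Rightarrow> (nat \<Rightarrow> nat \<Rightarrow> complex) \<Rightarrow> nat list \<Rightarrow> complex" where
  "toric_point n c t = (\<lambda>is. if is \<in> perm_lists n then c * (\<Prod>k<n. t k (is ! k)) else 0)"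

definition moment_points :: "nat \<Rightarrow> (nat list \<Rightarrow> complex) set" where
  "moment_points n = {moment_point n c \<mu> | c \<mu>. True}"

definition toric_points :: "nat \<Rightarrow> (nat list \<Rightarrow> complex) set" where
  "toric_points n = {toric_point n c t | c t. True}"

lemma moment_variety_staircase:
  "moment_variety n (staircase n) = zariski_closure (perm_lists n) (moment_points n)"
  unfolding moment_variety_def proj_closure_cone_def moment_points_def moment_point_def
  by (simp add: N_lambda_staircase)

lemma moment_point_in_ambient: "moment_point n c \<mu> \<in> ambient (perm_lists n)"
  unfolding moment_point_def ambient_def by auto

lemma toric_point_in_ambient: "toric_point n c t \<in> ambient (perm_lists n)"
  unfolding toric_point_def ambient_def by auto

lemma moment_points_subset_ambient: "moment_points n \<subseteq> ambient (perm_lists n)"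
  unfolding moment_points_def using moment_point_in_ambient by blast

lemma moment_point_eq_toric_point:
  "moment_point n c \<mu> = toric_point n c (\<lambda>k b. if b = 0 then 1 else \<mu> k b)"
  unfolding moment_point_def toric_point_def moment_coord_def by (simp add: fun_eq_iff)

text \<open>Dividing row \<open>k\<close> of \<open>t\<close> by its entry in column \<open>0\<close> turns a toric point into a moment point.\<close>

lemma toric_point_in_moment_points:
  assumes "\<And>k. k < n \<Longrightarrow> t k 0 \<noteq> 0"
  shows "toric_point n c t \<in> moment_points n"
proof -
  define \<mu> where "\<mu> = (\<lambda>k b. t k b / t k 0)"
  have "(\<Prod>k<n. t k (is ! k)) = (\<Prod>k<n. t k 0) * moment_coord n \<mu> is" for "is"
  proof -
    have "(\<Prod>k<n. t k (is ! k)) = (\<Prod>k<n. t k 0 * (if is ! k = 0 then 1 else \<mu> k (is ! k)))"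
      by (rule prod.cong) (auto simp: \<mu>_def assms)
    then show ?thesis unfolding moment_coord_def by (simp add: prod.distrib)
  qed
  then have "toric_point n c t = moment_point n (c * (\<Prod>k<n. t k 0)) \<mu>"
    unfolding toric_point_def moment_point_def by (simp add: fun_eq_iff mult.assoc)
  then show ?thesis unfolding moment_points_def by blast
qed

lemma toric_points_subset_closure: "toric_points n \<subseteq> zariski_closure (perm_lists n) (moment_points n)"
proof
  fix x assume "x \<in> toric_points n"
  then obtain c t where x: "x = toric_point n c t" unfolding toric_points_def by blast
  define L where "L = (\<lambda>s. toric_point n c (\<lambda>k b. if b = 0 then t k 0 + s else t k b))"
  have "L s \<in> moment_points n" if "s \<notin> (\<lambda>k. - t k 0) ` {..<n}" for s
    unfolding L_def by (rule toric_point_in_moment_points) (use that in \<open>force simp: add_eq_0_iff\<close>)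
  moreover have "(\<lambda>s. L s v) \<in> range poly" for v
  proof -
    have "(\<lambda>s. if b = 0 then t k 0 + s else t k b) \<in> range poly" for k b
      using affine_in_range_poly[of "t k 0" 1]
      by (cases "b = 0") (simp_all add: fun_subalgebra_const[OF fun_subalgebra_poly])
    then show ?thesis
      unfolding L_def toric_point_def
      by (cases "v \<in> perm_lists n")
        (auto intro!: fun_subalgebra_mult[OF fun_subalgebra_poly]
          fun_subalgebra_prod[OF fun_subalgebra_poly] fun_subalgebra_const[OF fun_subalgebra_poly])
  qed
  ultimately have "L 0 \<in> zariski_closure (perm_lists n) (moment_points n)"
    by (intro zariski_closure_polynomial_curve[where E = "(\<lambda>k. - t k 0) ` {..<n}"])
      (auto simp: L_def toric_point_in_ambient)
  moreover have "L 0 = x"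
    unfolding L_def x by (rule arg_cong[where f = "toric_point n c"]) (auto simp: fun_eq_iff)
  ultimately show "x \<in> zariski_closure (perm_lists n) (moment_points n)" by simp
qed

lemma moment_variety_staircase_toric:
  "moment_variety n (staircase n) = zariski_closure (perm_lists n) (toric_points n)"
  unfolding moment_variety_staircase
proof (rule zariski_closure_eqI[OF _ toric_points_subset_closure moment_points_subset_ambient])
  show "moment_points n \<subseteq> toric_points n"
    unfolding moment_points_def toric_points_def using moment_point_eq_toric_point by blast
qed

definition relabel :: "nat \<Rightarrow> ((nat \<times> nat \<Rightarrow> nat) \<Rightarrow> complex) \<Rightarrow> nat list \<Rightarrow> complex" where
  "relabel n z = (\<lambda>is. if is \<in> perm_lists n then z (ident_matrix n is) else 0)"

definition unrelabel :: "nat \<Rightarrow> (nat list \<Rightarrow> complex) \<Rightarrow> (nat \<times> nat \<Rightarrow> nat) \<Rightarrow> complex" where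
  "unrelabel n y = (\<lambda>P. if P \<in> perm_matrices n then y (inv_into (perm_lists n) (ident_matrix n) P) else 0)"

definition birkhoff_points :: "nat \<Rightarrow> ((nat \<times> nat \<Rightarrow> nat) \<Rightarrow> complex) set" where
  "birkhoff_points n = {(\<lambda>P. if P \<in> perm_matrices n then c * toric_coord n t P else 0) | c t. True}"

lemma toric_coord_ident_matrix:
  assumes v: "v \<in> perm_lists n"
  shows "toric_coord n t (ident_matrix n v) = (\<Prod>k<n. t (k, v ! k))"
proof -
  have "toric_coord n t (ident_matrix n v) = (\<Prod>a<n. \<Prod>b<n. t (a, b) ^ ident_matrix n v (a, b))"
    unfolding toric_coord_def by (simp add: prod.cartesian_product)
  also have "\<dots> = (\<Prod>a<n. \<Prod>b<n. if b = v ! a then t (a, b) else 1)"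
    by (intro prod.cong refl) (auto simp: ident_matrix_def)
  also have "\<dots> = (\<Prod>a<n. t (a, v ! a))"
    by (intro prod.cong refl) (simp add: prod.delta' perm_lists_nth_less[OF v])
  finally show ?thesis .
qed

lemma relabel_birkhoff_points: "relabel n ` birkhoff_points n = toric_points n"
proof -
  have relabel_eq: "relabel n (\<lambda>P. if P \<in> perm_matrices n then c * toric_coord n t P else 0) =
      toric_point n c (\<lambda>k b. t (k, b))" for c t
    unfolding relabel_def toric_point_def
    using bij_betw_apply[OF bij_betw_ident_matrix] toric_coord_ident_matrix by (auto simp: fun_eq_iff)
  show ?thesis
  proof (intro equalityI subsetI)
    fix y assume "y \<in> relabel n ` birkhoff_points n"
    then show "y \<in> toric_points n"
      unfolding birkhoff_points_def toric_points_def using relabel_eq by auto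
  next
    fix y assume "y \<in> toric_points n"
    then obtain c t where "y = toric_point n c t" unfolding toric_points_def by blast
    then have "y = relabel n (\<lambda>P. if P \<in> perm_matrices n then c * toric_coord n (\<lambda>(k, b). t k b) P else 0)"
      using relabel_eq[of c "\<lambda>(k, b). t k b"] by simp
    then show "y \<in> relabel n ` birkhoff_points n" unfolding birkhoff_points_def by blast
  qed
qed

lemma moment_variety_eq_relabel_birkhoff:
  "moment_variety n (staircase n) = relabel n ` birkhoff_toric_variety n"
proof -
  note bij = bij_betw_ident_matrix[of n]
  have "relabel n ` zariski_closure (perm_matrices n) (birkhoff_points n) =
      zariski_closure (perm_lists n) (relabel n ` birkhoff_points n)"
  proof (rule zariski_closure_image)
    show "birkhoff_points n \<subseteq> ambient (perm_matrices n)"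
      unfolding birkhoff_points_def ambient_def by auto
    show "relabel n x \<in> ambient (perm_lists n)" for x
      unfolding relabel_def ambient_def by auto
    show "unrelabel n y \<in> ambient (perm_matrices n)" for y
      unfolding unrelabel_def ambient_def by auto
    show "poly_fun (\<lambda>x. relabel n x v)" for v
      unfolding relabel_def by (cases "v \<in> perm_lists n") (simp_all add: poly_fun_coord
          poly_fun_deg_imp_poly_fun[OF poly_fun_deg_const])
    show "poly_fun (\<lambda>y. unrelabel n y P)" for P
      unfolding unrelabel_def by (cases "P \<in> perm_matrices n") (simp_all add: poly_fun_coord
          poly_fun_deg_imp_poly_fun[OF poly_fun_deg_const])
    show "relabel n (unrelabel n y) = y" if "y \<in> ambient (perm_lists n)" for y
      using that bij_betw_apply[OF bij] bij_betw_inv_into_left[OF bij]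
      unfolding relabel_def unrelabel_def ambient_def by (auto simp: fun_eq_iff)
    show "unrelabel n (relabel n x) = x" if "x \<in> ambient (perm_matrices n)" for x
    proof
      fix P
      have "inv_into (perm_lists n) (ident_matrix n) P \<in> perm_lists n \<and>
          ident_matrix n (inv_into (perm_lists n) (ident_matrix n) P) = P" if "P \<in> perm_matrices n"
        using that bij_betw_imp_surj_on[OF bij] by (auto intro: inv_into_into f_inv_into_f)
      then show "unrelabel n (relabel n x) P = x P"
        using \<open>x \<in> ambient (perm_matrices n)\<close> unfolding relabel_def unrelabel_def ambient_def
        by (cases "P \<in> perm_matrices n") simp_all
    qed
  qed
  then show ?thesis
    unfolding moment_variety_staircase_toric birkhoff_toric_variety_def proj_closure_cone_def
      relabel_birkhoff_points[symmetric] birkhoff_points_def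
    by simp
qed

section \<open>The Hilbert function of the moment variety\<close>

definition free_entries :: "nat \<Rightarrow> (nat \<times> nat) set" where
  "free_entries n = {..<n} \<times> {1..<n}"

definition param_monomial ::
  "nat \<Rightarrow> nat \<Rightarrow> (nat \<times> nat \<Rightarrow> nat) \<Rightarrow> complex \<times> (nat \<Rightarrow> nat \<Rightarrow> complex) \<Rightarrow> complex" where
  "param_monomial n d A = (\<lambda>(c, \<mu>). c ^ d * (\<Prod>kb\<in>free_entries n. \<mu> (fst kb) (snd kb) ^ A kb))"

definition balanced_exponents :: "nat \<Rightarrow> nat \<Rightarrow> (nat \<times> (nat \<times> nat \<Rightarrow> nat)) set" where
  "balanced_exponents n D = {(d, A). d \<le> D \<and> A \<in> (\<Pi>\<^sub>E kb\<in>free_entries n. {..D}) \<and>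
     (\<forall>b\<in>{1..<n}. (\<Sum>k<n. A (k, b)) = d)}"

lemma finite_balanced_exponents: "finite (balanced_exponents n D)"
proof (rule finite_subset)
  show "balanced_exponents n D \<subseteq> {..D} \<times> (\<Pi>\<^sub>E kb\<in>free_entries n. {..D})"
    unfolding balanced_exponents_def by auto
qed (simp add: finite_PiE free_entries_def)

lemma balanced_exponents_eqI:
  assumes n: "1 \<le> n" and dA: "(d, A) \<in> balanced_exponents n D" and dA': "(d, A') \<in> balanced_exponents n D"
    and rows: "\<And>k b. k < n - 1 \<Longrightarrow> b \<in> {1..<n} \<Longrightarrow> A (k, b) = A' (k, b)"
  shows "A = A'"
proof
  fix kb
  show "A kb = A' kb"
  proof (cases "kb \<in> free_entries n")
    case False
    then show ?thesis
      using dA dA' unfolding balanced_exponents_def by (cases kb) (auto simp: PiE_def extensional_def)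
  next
    case True
    then obtain k b where kb: "kb = (k, b)" "k < n" "b \<in> {1..<n}" unfolding free_entries_def by auto
    have last_row: "B (n - 1, b) = d - (\<Sum>k<n - 1. B (k, b))" if "(d, B) \<in> balanced_exponents n D" for B
    proof -
      have "(\<Sum>k<n. B (k, b)) = (\<Sum>k<n - 1. B (k, b)) + B (n - 1, b)"
        using n by (cases n) simp_all
      with that kb(3) show ?thesis unfolding balanced_exponents_def by auto
    qed
    show ?thesis
    proof (cases "k < n - 1")
      case False
      then have "k = n - 1" using kb by simp
      then show ?thesis using last_row[OF dA] last_row[OF dA'] rows kb(1,3) by simp
    qed (use rows kb in simp)
  qed
qed

lemma card_balanced_exponents:
  assumes "1 \<le> n"
  shows "card (balanced_exponents n D) \<le> (D + 1) ^ ((n - 1)^2 + 1)"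
proof -
  define rows where "rows = {..<n - 1} \<times> {1..<n}"
  define restr where "restr = (\<lambda>(d :: nat, A :: nat \<times> nat \<Rightarrow> nat). (d, restrict A rows))"
  have "inj_on restr (balanced_exponents n D)"
  proof (rule inj_onI)
    fix dA dA' assume mem: "dA \<in> balanced_exponents n D" "dA' \<in> balanced_exponents n D"
      and eq: "restr dA = restr dA'"
    obtain d A d' A' where dA: "dA = (d, A)" "dA' = (d', A')" by (cases dA, cases dA')
    have d: "d = d'" and restr_eq: "restrict A rows = restrict A' rows"
      using eq unfolding dA restr_def by auto
    have "A (k, b) = A' (k, b)" if "k < n - 1" "b \<in> {1..<n}" for k b
      using fun_cong[OF restr_eq, of "(k, b)"] that unfolding rows_def by simp
    then have "A = A'" using balanced_exponents_eqI[OF assms] mem unfolding dA d by blast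
    then show "dA = dA'" using dA d by simp
  qed
  moreover have "restr ` balanced_exponents n D \<subseteq> {..D} \<times> (\<Pi>\<^sub>E kb\<in>rows. {..D})"
    unfolding restr_def balanced_exponents_def rows_def free_entries_def by (auto simp: PiE_def Pi_def)
  moreover have "finite ({..D} \<times> (\<Pi>\<^sub>E kb\<in>rows. {..D}))" unfolding rows_def by (simp add: finite_PiE)
  ultimately have "card (balanced_exponents n D) \<le> card ({..D} \<times> (\<Pi>\<^sub>E kb\<in>rows. {..D}))"
    by (rule card_inj_on_le)
  also have "\<dots> = (D + 1) ^ ((n - 1)^2 + 1)"
    unfolding rows_def by (simp add: card_cartesian_product card_PiE power2_eq_square)
  finally show ?thesis .
qed

lemma moment_coord_power:
  assumes v: "v \<in> perm_lists n"
  shows "moment_coord n \<mu> v ^ e =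
    (\<Prod>kb\<in>free_entries n. \<mu> (fst kb) (snd kb) ^ (if v ! fst kb = snd kb then e else 0))"
proof -
  have "(if v ! k = 0 then 1 else \<mu> k (v ! k)) ^ e = (\<Prod>b\<in>{1..<n}. \<mu> k b ^ (if v ! k = b then e else 0))"
    if k: "k < n" for k
  proof -
    have "(\<Prod>b\<in>{1..<n}. \<mu> k b ^ (if v ! k = b then e else 0)) =
        (\<Prod>b\<in>{1..<n}. if v ! k = b then \<mu> k b ^ e else 1)"
      by (rule prod.cong) auto
    also have "\<dots> = (if v ! k = 0 then 1 else \<mu> k (v ! k)) ^ e"
      using perm_lists_nth_less[OF v k] by (simp add: prod.delta')
    finally show ?thesis by simp
  qed
  then have "moment_coord n \<mu> v ^ e = (\<Prod>k<n. \<Prod>b\<in>{1..<n}. \<mu> k b ^ (if v ! k = b then e else 0))"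
    unfolding moment_coord_def prod_power_distrib by (intro prod.cong) simp_all
  then show ?thesis unfolding free_entries_def by (simp add: prod.cartesian_product split_def)
qed

definition exponent_matrix :: "nat \<Rightarrow> (nat list \<Rightarrow>\<^sub>0 nat) \<Rightarrow> nat \<times> nat \<Rightarrow> nat" where
  "exponent_matrix n m = restrict (\<lambda>kb. \<Sum>v\<in>Poly_Mapping.keys m.
     if v ! fst kb = snd kb then Poly_Mapping.lookup m v else 0) (free_entries n)"

lemma monom_eval_moment_point:
  assumes K: "Poly_Mapping.keys m \<subseteq> perm_lists n"
  shows "monom_eval m (moment_point n c \<mu>) =
    param_monomial n (monom_degree m) (exponent_matrix n m) (c, \<mu>)"
proof -
  let ?K = "Poly_Mapping.keys m" and ?e = "Poly_Mapping.lookup m"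
  have "monom_eval m (moment_point n c \<mu>) = (\<Prod>v\<in>?K. (c * moment_coord n \<mu> v) ^ ?e v)"
    unfolding monom_eval_eq_prod_keys using K by (intro prod.cong) (auto simp: moment_point_def)
  also have "\<dots> = c ^ monom_degree m * (\<Prod>v\<in>?K. moment_coord n \<mu> v ^ ?e v)"
    by (simp add: power_mult_distrib prod.distrib power_sum monom_degree_def)
  also have "(\<Prod>v\<in>?K. moment_coord n \<mu> v ^ ?e v) = (\<Prod>v\<in>?K. \<Prod>kb\<in>free_entries n.
      \<mu> (fst kb) (snd kb) ^ (if v ! fst kb = snd kb then ?e v else 0))"
    using K moment_coord_power by (intro prod.cong) auto
  also have "\<dots> = (\<Prod>kb\<in>free_entries n. \<Prod>v\<in>?K.
      \<mu> (fst kb) (snd kb) ^ (if v ! fst kb = snd kb then ?e v else 0))"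
    by (rule prod.swap)
  also have "\<dots> = (\<Prod>kb\<in>free_entries n. \<mu> (fst kb) (snd kb) ^ exponent_matrix n m kb)"
    by (intro prod.cong) (auto simp: exponent_matrix_def power_sum)
  finally show ?thesis unfolding param_monomial_def by simp
qed

text \<open>Every index vector contains each nonzero value exactly once, so the column sums of the
  exponent matrix all equal the degree.\<close>

lemma exponent_matrix_balanced:
  assumes K: "Poly_Mapping.keys m \<subseteq> perm_lists n" and D: "monom_degree m \<le> D"
  shows "(monom_degree m, exponent_matrix n m) \<in> balanced_exponents n D"
proof -
  let ?K = "Poly_Mapping.keys m" and ?e = "Poly_Mapping.lookup m"
  have "exponent_matrix n m kb \<le> D" if "kb \<in> free_entries n" for kb
  proof -
    have "exponent_matrix n m kb \<le> (\<Sum>v\<in>?K. ?e v)"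
      unfolding exponent_matrix_def using that by (auto intro!: sum_mono)
    then show ?thesis using D unfolding monom_degree_def by simp
  qed
  then have "exponent_matrix n m \<in> (\<Pi>\<^sub>E kb\<in>free_entries n. {..D})"
    by (auto simp: exponent_matrix_def)
  moreover have "(\<Sum>k<n. exponent_matrix n m (k, b)) = monom_degree m" if b: "b \<in> {1..<n}" for b
  proof -
    have "(\<Sum>k<n. exponent_matrix n m (k, b)) = (\<Sum>k<n. \<Sum>v\<in>?K. if v ! k = b then ?e v else 0)"
      using b by (intro sum.cong) (auto simp: exponent_matrix_def free_entries_def)
    also have "\<dots> = (\<Sum>v\<in>?K. \<Sum>k<n. if v ! k = b then ?e v else 0)" by (rule sum.swap)
    also have "\<dots> = (\<Sum>v\<in>?K. ?e v)"
    proof (rule sum.cong[OF refl])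
      fix v assume "v \<in> ?K"
      then have v: "v \<in> perm_lists n" using K by blast
      obtain k0 where k0: "k0 < n" "v ! k0 = b" using perm_lists_nth_surj[OF v] b by auto
      have "(\<Sum>k<n. if v ! k = b then ?e v else 0) = (\<Sum>k<n. if k0 = k then ?e v else 0)"
        using perm_lists_nth_eq_iff[OF v] k0 by (intro sum.cong) auto
      then show "(\<Sum>k<n. if v ! k = b then ?e v else 0) = ?e v" using k0 by simp
    qed
    finally show ?thesis unfolding monom_degree_def .
  qed
  ultimately show ?thesis unfolding balanced_exponents_def using D by auto
qed

lemma monom_eval_moment_point_outside:
  assumes "\<not> Poly_Mapping.keys m \<subseteq> perm_lists n"
  shows "monom_eval m (moment_point n c \<mu>) = 0"
proof -
  obtain v where v: "v \<in> Poly_Mapping.keys m" "v \<notin> perm_lists n" using assms by blast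
  then have "moment_point n c \<mu> v ^ Poly_Mapping.lookup m v = 0"
    by (simp add: moment_point_def in_keys_iff)
  then show ?thesis unfolding monom_eval_eq_prod_keys using v(1) by (intro prod_zero) auto
qed

lemma poly_fun_deg_pullback_in_span:
  assumes "poly_fun_deg D g"
  shows "(\<lambda>(c, \<mu>). g (moment_point n c \<mu>)) \<in>
    fun_space.span ((\<lambda>(d, A). param_monomial n d A) ` balanced_exponents n D)"
    (is "_ \<in> fun_space.span ?B")
proof -
  obtain p where p: "g = mpoly_eval p" "\<And>m. m \<in> Poly_Mapping.keys p \<Longrightarrow> monom_degree m \<le> D"
    using assms unfolding poly_fun_deg_def by blast
  have monom: "(\<lambda>(c, \<mu>). monom_eval m (moment_point n c \<mu>)) \<in> fun_space.span ?B"
    if m: "m \<in> Poly_Mapping.keys p" for m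
  proof (cases "Poly_Mapping.keys m \<subseteq> perm_lists n")
    case True
    then have "(\<lambda>(c, \<mu>). monom_eval m (moment_point n c \<mu>)) =
        param_monomial n (monom_degree m) (exponent_matrix n m)"
      by (auto simp: fun_eq_iff monom_eval_moment_point)
    moreover have "(monom_degree m, exponent_matrix n m) \<in> balanced_exponents n D"
      by (rule exponent_matrix_balanced[OF True p(2)[OF m]])
    ultimately show ?thesis by (auto intro: fun_space.span_base)
  next
    case False
    then have "(\<lambda>(c, \<mu>). monom_eval m (moment_point n c \<mu>)) = 0"
      by (auto simp: fun_eq_iff monom_eval_moment_point_outside)
    then show ?thesis using fun_space.span_zero by simp
  qed
  have "(\<lambda>(c, \<mu>). g (moment_point n c \<mu>)) = (\<Sum>m\<in>Poly_Mapping.keys p.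
      fscale (Poly_Mapping.lookup p m) (\<lambda>(c, \<mu>). monom_eval m (moment_point n c \<mu>)))"
    unfolding p(1) by (auto simp: fun_eq_iff sum_fun_apply fscale_def mpoly_eval_eq_sum_keys)
  also have "\<dots> \<in> fun_space.span ?B"
    by (intro fun_space.span_sum fun_space.span_scale monom)
  finally show ?thesis .
qed

lemma hilbert_bound_moment_variety:
  assumes n: "1 \<le> n"
  shows "hilbert_bound (moment_variety n (staircase n)) ((n - 1)^2 + 1) (2 ^ ((n - 1)^2 + 1))"
  unfolding hilbert_bound_def
proof (intro allI impI)
  fix D m assume D: "1 \<le> D" and "indep_poly_funs (moment_variety n (staircase n)) D m"
  then obtain q where q: "\<And>j. j < m \<Longrightarrow> poly_fun_deg D (q j)"
    "lin_indep_on (moment_variety n (staircase n)) q m"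
    unfolding indep_poly_funs_def by blast
  let ?r = "(n - 1)^2 + 1" and ?B = "(\<lambda>(d, A). param_monomial n d A) ` balanced_exponents n D"
  define f where "f = (\<lambda>j (c, \<mu>). q j (moment_point n c \<mu>))"
  have "lin_indep_on UNIV f m"
    unfolding lin_indep_on_def
  proof (rule allI, rule impI)
    fix \<alpha> assume "\<forall>z\<in>UNIV. (\<Sum>j<m. \<alpha> j * f j z) = 0"
    then have "\<forall>x\<in>moment_points n. (\<Sum>j<m. \<alpha> j * q j x) = 0"
      unfolding moment_points_def f_def by auto
    moreover have "poly_fun (\<lambda>x. \<Sum>j<m. \<alpha> j * q j x)"
      by (intro poly_fun_deg_imp_poly_fun[of D] poly_fun_deg_sum poly_fun_deg_scale q(1)) auto
    ultimately have "\<forall>x\<in>moment_variety n (staircase n). (\<Sum>j<m. \<alpha> j * q j x) = 0"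
      unfolding moment_variety_staircase
      using zariski_closure_vanishing[OF _ moment_points_subset_ambient] by blast
    then show "\<forall>j<m. \<alpha> j = 0" using q(2) unfolding lin_indep_on_def by blast
  qed
  moreover have "f j \<in> fun_space.span ?B" if "j < m" for j
    unfolding f_def by (rule poly_fun_deg_pullback_in_span[OF q(1)[OF that]])
  ultimately have "m \<le> card ?B"
    using lin_indep_on_UNIV_card_le[of ?B m f] finite_balanced_exponents by blast
  also have "\<dots> \<le> card (balanced_exponents n D)" by (rule card_image_le[OF finite_balanced_exponents])
  also have "\<dots> \<le> (D + 1) ^ ?r" by (rule card_balanced_exponents[OF n])
  finally have "real m \<le> real (D + 1) ^ ?r" by (metis of_nat_le_iff of_nat_power)
  also have "\<dots> \<le> (2 * real D) ^ ?r" using D by (intro power_mono) auto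
  also have "\<dots> = 2 ^ ?r * real D ^ ?r" by (rule power_mult_distrib)
  finally show "real m \<le> 2 ^ ?r * real D ^ ?r" .
qed

section \<open>A maximal chain in the moment variety\<close>

definition supported_perms :: "nat \<Rightarrow> (nat \<times> nat) set \<Rightarrow> nat list set" where
  "supported_perms n E = {v \<in> perm_lists n. \<forall>k<n. v ! k \<noteq> 0 \<longrightarrow> (k, v ! k) \<in> E}"

definition supported_moment_points :: "nat \<Rightarrow> (nat \<times> nat) set \<Rightarrow> (nat list \<Rightarrow> complex) set" where
  "supported_moment_points n E = {moment_point n c \<mu> | c \<mu>. \<forall>k b. (k, b) \<notin> E \<longrightarrow> \<mu> k b = 0}"

definition support_variety :: "nat \<Rightarrow> (nat \<times> nat) set \<Rightarrow> (nat list \<Rightarrow> complex) set" where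
  "support_variety n E = zariski_closure (perm_lists n) (supported_moment_points n E)"

lemma supported_moment_points_subset_ambient: "supported_moment_points n E \<subseteq> ambient (perm_lists n)"
  unfolding supported_moment_points_def using moment_point_in_ambient by blast

lemma support_variety_subset_moment_variety:
  "support_variety n E \<subseteq> moment_variety n (staircase n)"
  unfolding support_variety_def moment_variety_staircase
  by (rule zariski_closure_mono) (auto simp: supported_moment_points_def moment_points_def)

lemma support_variety_mono: "E \<subseteq> E' \<Longrightarrow> support_variety n E \<subseteq> support_variety n E'"
  unfolding support_variety_def supported_moment_points_def by (rule zariski_closure_mono) blast

text \<open>Any two supported moment points are joined by the image of a line in parameter space.\<close>

lemma irreducible_support_variety: "irreducible_closed (perm_lists n) (support_variety n E)"
  unfolding support_variety_def
proof (rule irreducible_closed_closure_polynomial_curves[OF supported_moment_points_subset_ambient])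
  show "supported_moment_points n E \<noteq> {}" unfolding supported_moment_points_def by auto
  fix x y assume "x \<in> supported_moment_points n E" "y \<in> supported_moment_points n E"
  then obtain c1 \<mu>1 c2 \<mu>2 where xy: "x = moment_point n c1 \<mu>1" "y = moment_point n c2 \<mu>2"
    and supp: "\<forall>k b. (k, b) \<notin> E \<longrightarrow> \<mu>1 k b = 0" "\<forall>k b. (k, b) \<notin> E \<longrightarrow> \<mu>2 k b = 0"
    unfolding supported_moment_points_def by blast
  define L where "L = (\<lambda>s. moment_point n (c1 + s * (c2 - c1)) (\<lambda>k b. \<mu>1 k b + s * (\<mu>2 k b - \<mu>1 k b)))"
  have "L 0 = x" "L 1 = y" unfolding L_def xy by (simp_all add: fun_eq_iff)
  moreover have "L s \<in> supported_moment_points n E" for s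
    unfolding L_def supported_moment_points_def
    by (rule CollectI, rule exI[of _ "c1 + s * (c2 - c1)"],
        rule exI[of _ "\<lambda>k b. \<mu>1 k b + s * (\<mu>2 k b - \<mu>1 k b)"]) (simp add: supp)
  moreover have "(\<lambda>s. L s v) \<in> range poly" for v
  proof -
    have "(\<lambda>s. if v ! k = 0 then 1 else \<mu>1 k (v ! k) + s * (\<mu>2 k (v ! k) - \<mu>1 k (v ! k))) \<in> range poly"
      for k by (cases "v ! k = 0") (simp_all add: fun_subalgebra_const[OF fun_subalgebra_poly] affine_in_range_poly)
    then show ?thesis
      unfolding L_def moment_point_def moment_coord_def
      by (cases "v \<in> perm_lists n") (auto intro!: fun_subalgebra_mult[OF fun_subalgebra_poly]
          fun_subalgebra_prod[OF fun_subalgebra_poly] fun_subalgebra_const[OF fun_subalgebra_poly]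
          affine_in_range_poly)
  qed
  ultimately show "\<exists>L. L 0 = x \<and> L 1 = y \<and> range L \<subseteq> supported_moment_points n E \<and>
      (\<forall>v. (\<lambda>s. L s v) \<in> range poly)" by (intro exI[of _ L]) blast
qed

lemma support_variety_nonzero_at:
  assumes w: "w \<in> supported_perms n E"
  shows "\<exists>x\<in>support_variety n E. x w \<noteq> 0"
proof -
  define x where "x = moment_point n 1 (\<lambda>k b. if (k, b) \<in> E then 1 else 0)"
  have "x \<in> supported_moment_points n E"
    unfolding x_def supported_moment_points_def
    by (rule CollectI, rule exI[of _ 1], rule exI[of _ "\<lambda>k b. if (k, b) \<in> E then 1 else 0"]) simp
  then have "x \<in> support_variety n E" unfolding support_variety_def using zariski_closure_subset by blast
  have "x w = (\<Prod>k<n. if w ! k = 0 then 1 else if (k, w ! k) \<in> E then 1 else 0)"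
    using w by (simp add: x_def moment_point_def moment_coord_def supported_perms_def)
  also have "\<dots> = 1" using w by (intro prod.neutral) (auto simp: supported_perms_def)
  finally show ?thesis using \<open>x \<in> support_variety n E\<close> by (intro bexI[of _ x]) simp_all
qed

lemma support_variety_zero_at:
  assumes w: "w \<in> perm_lists n" "w \<notin> supported_perms n E" and x: "x \<in> support_variety n E"
  shows "x w = 0"
proof -
  obtain k where k: "k < n" "w ! k \<noteq> 0" "(k, w ! k) \<notin> E" using w unfolding supported_perms_def by auto
  have "y w = 0" if y: "y \<in> supported_moment_points n E" for y
  proof -
    obtain c \<mu> where y: "y = moment_point n c \<mu>" "\<forall>k b. (k, b) \<notin> E \<longrightarrow> \<mu> k b = 0"
      using y unfolding supported_moment_points_def by blast
    have "moment_coord n \<mu> w = 0"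
      unfolding moment_coord_def by (rule prod_zero) (use k y(2) in auto)
    then show ?thesis using y(1) by (simp add: moment_point_def)
  qed
  then show ?thesis
    using zariski_closure_vanishing[OF poly_fun_coord supported_moment_points_subset_ambient] x
    unfolding support_variety_def by blast
qed

lemma support_variety_psubset:
  assumes "E \<subseteq> E'" "w \<in> supported_perms n E'" "w \<notin> supported_perms n E"
  shows "support_variety n E \<subset> support_variety n E'"
proof -
  obtain x where "x \<in> support_variety n E'" "x w \<noteq> 0" using support_variety_nonzero_at[OF assms(2)] by blast
  moreover have "w \<in> perm_lists n" using assms(2) unfolding supported_perms_def by blast
  ultimately have "x \<notin> support_variety n E" using support_variety_zero_at assms(3) by blast
  then show ?thesis using support_variety_mono[OF assms(1)] \<open>x \<in> support_variety n E'\<close> by blast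
qed

lemma origin_psubset_support_variety:
  assumes "w \<in> supported_perms n E"
  shows "{\<lambda>v. 0} \<subset> support_variety n E"
proof -
  have "moment_point n 0 (\<lambda>k b. 0) \<in> supported_moment_points n E"
    unfolding supported_moment_points_def by auto
  moreover have "moment_point n 0 (\<lambda>k b. 0) = (\<lambda>v. 0)" by (simp add: moment_point_def fun_eq_iff)
  ultimately have "(\<lambda>v. 0) \<in> support_variety n E"
    unfolding support_variety_def using zariski_closure_subset by fastforce
  moreover obtain x where "x \<in> support_variety n E" "x w \<noteq> 0"
    using support_variety_nonzero_at[OF assms] by blast
  ultimately show ?thesis by force
qed

definition admits_new_perm :: "nat \<Rightarrow> (nat \<times> nat) set \<Rightarrow> (nat \<times> nat) set \<Rightarrow> bool" where
  "admits_new_perm n E E' \<longleftrightarrow> E \<subseteq> E' \<and> (\<exists>w. w \<in> supported_perms n E' \<and> w \<notin> supported_perms n E)"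

definition block_pattern :: "nat \<Rightarrow> nat \<Rightarrow> (nat \<times> nat) set" where
  "block_pattern n m = {(k, b). (k \<le> m \<and> 1 \<le> b \<and> b \<le> m) \<or> (m < k \<and> k < n \<and> b = k)}"

text \<open>The patterns between \<open>block_pattern n m\<close> and \<open>block_pattern n (m + 1)\<close>: first the entries of
  column \<open>m + 1\<close> in rows \<open>0..m\<close> are added one by one, then those of row \<open>m + 1\<close> in columns
  \<open>1..m\<close>, in \<open>2 m + 1\<close> steps.\<close>

definition block_pattern_step :: "nat \<Rightarrow> nat \<Rightarrow> nat \<Rightarrow> (nat \<times> nat) set" where
  "block_pattern_step n m j = block_pattern n m \<union> {(k, b). b = m + 1 \<and> k < j \<and> k \<le> m} \<union>
     {(k, b). k = m + 1 \<and> 1 \<le> b \<and> m + 1 + b \<le> j}"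

lemma map_upt_in_supported_perms:
  assumes "\<sigma> ` {..<n} \<subseteq> {..<n}" "inj_on \<sigma> {..<n}" "\<And>k. k < n \<Longrightarrow> \<sigma> k \<noteq> 0 \<Longrightarrow> (k, \<sigma> k) \<in> E"
  shows "map \<sigma> [0..<n] \<in> supported_perms n E"
  unfolding supported_perms_def using map_upt_in_perm_lists[OF assms(1,2)] assms(3) by auto

lemma map_upt_notin_supported_perms:
  "k < n \<Longrightarrow> \<sigma> k \<noteq> 0 \<Longrightarrow> (k, \<sigma> k) \<notin> E \<Longrightarrow> map \<sigma> [0..<n] \<notin> supported_perms n E"
  unfolding supported_perms_def by auto

lemma block_pattern_step_new_perm_column:
  assumes mn: "m + 1 < n" and j: "j \<le> m"
  shows "\<exists>w. w \<in> supported_perms n (block_pattern_step n m (Suc j)) \<and>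
    w \<notin> supported_perms n (block_pattern_step n m j)"
proof -
  define \<sigma> where "\<sigma> = (\<lambda>x. if x = 0 then (if j = 0 then m + 1 else j)
                         else if x = j then m + 1 else if x = m + 1 then 0 else x)"
  have "\<sigma> ` {..<n} \<subseteq> {..<n}" "inj_on \<sigma> {..<n}"
    using mn j unfolding \<sigma>_def inj_on_def by auto
  then have "map \<sigma> [0..<n] \<in> supported_perms n (block_pattern_step n m (Suc j))"
    using mn j unfolding \<sigma>_def
    by (intro map_upt_in_supported_perms) (auto simp: block_pattern_step_def block_pattern_def split: if_splits)
  moreover have "map \<sigma> [0..<n] \<notin> supported_perms n (block_pattern_step n m j)"
  proof (cases "j = 0")
    case True
    show ?thesis by (rule map_upt_notin_supported_perms[of 0])
      (use True mn in \<open>auto simp: \<sigma>_def block_pattern_step_def block_pattern_def\<close>)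
  next
    case False
    show ?thesis by (rule map_upt_notin_supported_perms[of j])
      (use False j mn in \<open>auto simp: \<sigma>_def block_pattern_step_def block_pattern_def\<close>)
  qed
  ultimately show ?thesis by blast
qed

lemma block_pattern_step_new_perm_row:
  assumes mn: "m + 1 < n" and b: "1 \<le> b" "b \<le> m"
  shows "\<exists>w. w \<in> supported_perms n (block_pattern_step n m (Suc (m + b))) \<and>
    w \<notin> supported_perms n (block_pattern_step n m (m + b))"
proof -
  define \<sigma> where "\<sigma> = (\<lambda>x. if x = m + 1 then b else if x = b then 0 else if x = 0 then m + 1 else x)"
  have "\<sigma> ` {..<n} \<subseteq> {..<n}" "inj_on \<sigma> {..<n}"
    using mn b unfolding \<sigma>_def inj_on_def by auto
  then have "map \<sigma> [0..<n] \<in> supported_perms n (block_pattern_step n m (Suc (m + b)))"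
    using mn b unfolding \<sigma>_def
    by (intro map_upt_in_supported_perms) (auto simp: block_pattern_step_def block_pattern_def split: if_splits)
  moreover have "map \<sigma> [0..<n] \<notin> supported_perms n (block_pattern_step n m (m + b))"
    by (rule map_upt_notin_supported_perms[of "m + 1"])
      (use b mn in \<open>auto simp: \<sigma>_def block_pattern_step_def block_pattern_def\<close>)
  ultimately show ?thesis by blast
qed

lemma block_pattern_step_admits_new_perm:
  assumes "m + 1 < n" "j < 2 * m + 1"
  shows "admits_new_perm n (block_pattern_step n m j) (block_pattern_step n m (Suc j))"
proof -
  have "block_pattern_step n m j \<subseteq> block_pattern_step n m (Suc j)"
    unfolding block_pattern_step_def by auto
  moreover have "\<exists>w. w \<in> supported_perms n (block_pattern_step n m (Suc j)) \<and>
      w \<notin> supported_perms n (block_pattern_step n m j)"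
  proof (cases "j \<le> m")
    case False
    then have "j = m + (j - m)" "1 \<le> j - m" "j - m \<le> m" using assms(2) by auto
    then show ?thesis using block_pattern_step_new_perm_row[OF assms(1)] by metis
  qed (rule block_pattern_step_new_perm_column[OF assms(1)])
  ultimately show ?thesis unfolding admits_new_perm_def by blast
qed

lemma block_pattern_chain:
  assumes "m < n"
  obtains Es where "Es 0 = block_pattern n 0" "Es (m^2) = block_pattern n m"
    "\<And>i. i < m^2 \<Longrightarrow> admits_new_perm n (Es i) (Es (Suc i))"
  using assms
proof (induction m arbitrary: thesis)
  case 0
  show ?case by (rule "0.prems"(1)[of "\<lambda>_. block_pattern n 0"]) simp_all
next
  case (Suc m)
  obtain Es where Es: "Es 0 = block_pattern n 0" "Es (m^2) = block_pattern n m"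
    "\<And>i. i < m^2 \<Longrightarrow> admits_new_perm n (Es i) (Es (Suc i))"
    using Suc.IH Suc.prems(2) by auto
  have mn: "m + 1 < n" using Suc.prems(2) by simp
  define Es' where "Es' = (\<lambda>i. if i \<le> m^2 then Es i else block_pattern_step n m (i - m^2))"
  have step: "Es' i = block_pattern_step n m (i - m^2)" if "m^2 \<le> i" for i
    using that Es(2) unfolding Es'_def block_pattern_step_def by (cases "i = m^2") auto
  have "Es' 0 = block_pattern n 0" using Es(1) unfolding Es'_def by simp
  moreover have "Es' ((Suc m)^2) = block_pattern n (Suc m)"
  proof -
    have "(Suc m)^2 - m^2 = 2 * m + 1" by (simp add: power2_eq_square)
    moreover have "block_pattern_step n m (2 * m + 1) = block_pattern n (Suc m)"
      using mn unfolding block_pattern_step_def block_pattern_def by auto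
    moreover have "m^2 \<le> (Suc m)^2" by (simp add: power_mono)
    ultimately show ?thesis using step by metis
  qed
  moreover have "admits_new_perm n (Es' i) (Es' (Suc i))" if i: "i < (Suc m)^2" for i
  proof (cases "i < m^2")
    case True
    then show ?thesis using Es(3) unfolding Es'_def by simp
  next
    case False
    then have "Es' i = block_pattern_step n m (i - m^2)" "Es' (Suc i) = block_pattern_step n m (Suc (i - m^2))"
      using step[of i] step[of "Suc i"] by (auto simp: Suc_diff_le)
    moreover have "i - m^2 < 2 * m + 1" using i False by (simp add: power2_eq_square)
    ultimately show ?thesis using block_pattern_step_admits_new_perm[OF mn] by simp
  qed
  ultimately show ?case by (rule Suc.prems(1))
qed

lemma moment_variety_chain:
  assumes "1 \<le> n"
  obtains C where
    "\<forall>j\<le>(n - 1)^2 + 1. irreducible_closed (perm_lists n) (C j) \<and> C j \<subseteq> moment_variety n (staircase n)"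
    "\<forall>j<(n - 1)^2 + 1. C j \<subset> C (Suc j)"
proof -
  from assms have "n - 1 < n" by simp
  then obtain Es where Es: "Es 0 = block_pattern n 0" "Es ((n - 1)^2) = block_pattern n (n - 1)"
    "\<And>i. i < (n - 1)^2 \<Longrightarrow> admits_new_perm n (Es i) (Es (Suc i))"
    using block_pattern_chain by blast
  define C where "C = (\<lambda>j. if j = 0 then {\<lambda>v. 0} else support_variety n (Es (j - 1)))"
  have "[0..<n] \<in> supported_perms n (Es 0)"
    using map_upt_in_supported_perms[of id n] by (simp add: Es(1) block_pattern_def)
  then have C01: "C 0 \<subset> C 1" unfolding C_def by (simp add: origin_psubset_support_variety)
  have "C j \<subset> C (Suc j)" if j: "j < (n - 1)^2 + 1" for j
  proof (cases j)
    case (Suc i)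
    then obtain w where "Es i \<subseteq> Es (Suc i)" "w \<in> supported_perms n (Es (Suc i))"
      "w \<notin> supported_perms n (Es i)"
      using Es(3)[of i] j unfolding admits_new_perm_def by auto
    then show ?thesis unfolding C_def using Suc by (simp add: support_variety_psubset)
  qed (use C01 in simp)
  moreover have "irreducible_closed (perm_lists n) (C j) \<and> C j \<subseteq> moment_variety n (staircase n)" for j
  proof (cases "j = 0")
    case True
    have "C 1 \<subseteq> moment_variety n (staircase n)"
      unfolding C_def by (simp add: support_variety_subset_moment_variety)
    then show ?thesis
      using True C01 irreducible_closed_singleton[OF zariski_closed_origin] unfolding C_def by auto
  qed (simp add: C_def irreducible_support_variety support_variety_subset_moment_variety)
  ultimately show ?thesis using that by blast
qed

theorem proposition2p4:
  fixes n :: nat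
  assumes "n \<ge> 2"
  shows "bij_betw (ident_matrix n) (N_lambda n (staircase n)) (perm_matrices n)
    \<and> card (N_lambda n (staircase n)) = fact n
    \<and> moment_variety n (staircase n) =
        (\<lambda>z. \<lambda>is. if is \<in> N_lambda n (staircase n) then z (ident_matrix n is) else 0)
          ` birkhoff_toric_variety n
    \<and> proj_dim (N_lambda n (staircase n)) (moment_variety n (staircase n)) = (n - 1)^2"
proof -
  from assms have "1 \<le> n" by simp
  then obtain C where
    "\<forall>j\<le>(n - 1)^2 + 1. irreducible_closed (perm_lists n) (C j) \<and> C j \<subseteq> moment_variety n (staircase n)"
    "\<forall>j<(n - 1)^2 + 1. C j \<subset> C (Suc j)"
    by (rule moment_variety_chain)
  with hilbert_bound_moment_variety[OF \<open>1 \<le> n\<close>]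
  have "krull_dim (perm_lists n) (moment_variety n (staircase n)) = (n - 1)^2 + 1"
    by (rule krull_dim_eqI)
  then show ?thesis
    unfolding N_lambda_staircase proj_dim_def
    using bij_betw_ident_matrix moment_variety_eq_relabel_birkhoff by (simp add: relabel_def)
qed

end
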